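(* Let $N\ge2$, let $\rho_1,\dots,\rho_N$ be two-qubit density operators ($\rho_k$ on qubits $((k-1)_2,k_1)$) with fidelities $F_k=\langle\Psi_{00}|\rho_k|\Psi_{00}\rangle$, let $\rho_{\mathrm{in}}=\bigotimes_k\rho_k$, and let $\mathcal P$ be any swap-and-correct protocol with non-postselected swapping channel $\Lambda_{\mathcal P}$. Let $F'=\langle\Psi_{00}|\Lambda_{\mathcal P}(\rho_{\mathrm{in}})|\Psi_{00}\rangle$ and $F'_{\mathcal W}=\langle\Psi_{00}|\Lambda_{\mathcal P}(\bigotimes_{k}\mathcal W(\rho_k))|\Psi_{00}\rangle$. If $\epsilon_k=1-F_k<\epsilon$ for all $k$, then $$|F'-F'_{\mathcal W}|\le\binom N2\epsilon^2+\mathcal O(N^3\epsilon^3).$$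
   Context: Bell states: $|\Psi_{mn}\rangle=(I_2\otimes X^mZ^n)\tfrac{1}{\sqrt2}(|00\rangle+|11\rangle)$. Werner twirl: $\mathcal W(\rho)=\frac{4F-1}{3}|\Psi_{00}\rangle\langle\Psi_{00}|+\frac{1-F}{3}I_4$ with $F=\langle\Psi_{00}|\rho|\Psi_{00}\rangle$. Let $A=\{I,X,Z,XZ\}$. Repeater chain: nodes $0,\dots,N$; end node $0$ holds qubit $0_2$, end node $N$ holds qubit $N_1$, each repeater node $k\in\{1,\dots,N-1\}$ holds qubits $k_1,k_2$. A syndrome $\vec s\in A^{N-1}$ has $s_k=X^mZ^n$ meaning the Bell-state measurement at node $k$ on $(k_1,k_2)$ projected onto $|\Psi_{s_k}\rangle:=|\Psi_{mn}\rangle_{k_1k_2}$. A swap-and-correct protocol is a map $\mathcal P:A^{N-1}\to A^{N+1}$, $\vec s\mapsto(\mathcal P_0(\vec s),\dots,\mathcal P_N(\vec s))$ (Pauli corrections at nodes $0,\dots,N$; for repeater nodes applied to qubit $k_1$ before the BSM) such that (A) for some permutation $\alpha$ of $\{1,\dots,N-1\}$, each $\mathcal P_{\alpha(k)}(\vec s)$ depends only on $s_{\alpha(1)},\dots,s_{\alpha(k-1)}$; (B) for every $\vec s$ the normalised output from $|\Psi_{00}\rangle\langle\Psi_{00}|^{\otimes N}$ is $|\Psi_{00}\rangle\langle\Psi_{00}|$. With $C_{\vec s}$ applying $\mathcal P_0(\vec s)$ to $0_2$, $\mathcal P_N(\vec s)$ to $N_1$ and $\mathcal P_k(\vec s)$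 to $k_1$, set $\Lambda_{\mathcal P,\vec s}(\rho)=\mathrm{Tr}_{\text{repeaters}}[(\bigotimes_{k}|\Psi_{s_k}\rangle\langle\Psi_{s_k}|)C_{\vec s}\rho C_{\vec s}^\dagger]$ and $\Lambda_{\mathcal P}=\sum_{\vec s}\Lambda_{\mathcal P,\vec s}$ (output on $(0_2,N_1)$). The $\mathcal O$-term is as $N\epsilon\to0$. *)

theory Defs
  imports Complex_Main "HOL-Library.FuncSet"
begin

text \<open>A qubit basis label is a bool (False = |0>, True = |1>). A two-qubit
basis label is a pair of bools. Operators are given by their matrix elements.\<close>

type_synonym qb2 = "bool \<times> bool"
type_synonym op1 = "bool \<Rightarrow> bool \<Rightarrow> complex"
type_synonym op2 = "qb2 \<Rightarrow> qb2 \<Rightarrow> complex"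

definition pI :: op1 where "pI i j = (if i = j then 1 else 0)"
definition pX :: op1 where "pX i j = (if i \<noteq> j then 1 else 0)"
definition pZ :: op1 where "pZ i j = (if i = j then (if i then -1 else 1) else 0)"

definition mmul1 :: "op1 \<Rightarrow> op1 \<Rightarrow> op1" where
  "mmul1 A B i j = (\<Sum>k\<in>UNIV. A i k * B k j)"

text \<open>The Pauli \<open>X^m Z^n\<close> labelled by \<open>(m,n)\<close>; the set \<open>A = {I,X,Z,XZ}\<close>
  is represented by \<open>bool \<times> bool\<close>.\<close>
definition pauli :: "bool \<times> bool \<Rightarrow> op1" where
  "pauli s = mmul1 (if fst s then pX else pI) (if snd s then pZ else pI)"

definition phi0 :: "qb2 \<Rightarrow> complex" where
  "phi0 x = (if fst x = snd x then complex_of_real (1 / sqrt 2) else 0)"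

definition bell :: "bool \<times> bool \<Rightarrow> qb2 \<Rightarrow> complex" where
  "bell s x = (\<Sum>c\<in>UNIV. \<Sum>d\<in>UNIV. pI (fst x) c * pauli s (snd x) d * phi0 (c, d))"

definition bellproj :: "bool \<times> bool \<Rightarrow> op2" where
  "bellproj s x y = bell s x * cnj (bell s y)"

definition fid :: "op2 \<Rightarrow> complex" where
  "fid \<rho> = (\<Sum>i\<in>UNIV. \<Sum>j\<in>UNIV. cnj (bell (False, False) i) * \<rho> i j * bell (False, False) j)"

definition tr2 :: "op2 \<Rightarrow> complex" where
  "tr2 \<rho> = (\<Sum>i\<in>UNIV. \<rho> i i)"

definition dens :: "op2 \<Rightarrow> bool" where
  "dens \<rho> \<longleftrightarrow>
     (\<forall>v :: qb2 \<Rightarrow> complex.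
        Im (\<Sum>i\<in>UNIV. \<Sum>j\<in>UNIV. cnj (v i) * \<rho> i j * v j) = 0 \<and>
        Re (\<Sum>i\<in>UNIV. \<Sum>j\<in>UNIV. cnj (v i) * \<rho> i j * v j) \<ge> 0)
     \<and> tr2 \<rho> = 1"

definition werner :: "op2 \<Rightarrow> op2" where
  "werner \<rho> i j = (4 * fid \<rho> - 1) / 3 * bellproj (False, False) i j
                    + (1 - fid \<rho>) / 3 * (if i = j then 1 else 0)"

text \<open>Link \<open>k \<in> {1..N}\<close> consists of qubits \<open>((k-1)_2, k_1)\<close>. A basis configuration
  of the whole chain is a map \<open>x\<close> on \<open>{1..N}\<close> with \<open>x k = (bit of (k-1)_2, bit of k_1)\<close>.
  Repeater bits are a map \<open>R\<close> on \<open>{1..N-1}\<close> with \<open>R k = (bit of k_1, bit of k_2)\<close>.\<close>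

definition cfgs :: "nat \<Rightarrow> (nat \<Rightarrow> qb2) set" where
  "cfgs N = PiE {1..N} (\<lambda>_. UNIV)"

definition reps :: "nat \<Rightarrow> (nat \<Rightarrow> qb2) set" where
  "reps N = PiE {1..N-1} (\<lambda>_. UNIV)"

definition syns :: "nat \<Rightarrow> (nat \<Rightarrow> bool \<times> bool) set" where
  "syns N = PiE {1..N-1} (\<lambda>_. UNIV)"

definition tens :: "nat \<Rightarrow> (nat \<Rightarrow> op2) \<Rightarrow> (nat \<Rightarrow> qb2) \<Rightarrow> (nat \<Rightarrow> qb2) \<Rightarrow> complex" where
  "tens N \<rho>s x y = (\<Prod>k\<in>{1..N}. \<rho>s k (x k) (y k))"

text \<open>Global configuration from end bits \<open>a\<close> (qubit \<open>0_2\<close>), \<open>b\<close> (qubit \<open>N_1\<close>)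
  and repeater bits \<open>R\<close>.\<close>
definition cfg :: "nat \<Rightarrow> bool \<Rightarrow> bool \<Rightarrow> (nat \<Rightarrow> qb2) \<Rightarrow> nat \<Rightarrow> qb2" where
  "cfg N a b R k =
     (if k \<in> {1..N}
      then (if k = 1 then a else snd (R (k - 1)), if k = N then b else fst (R k))
      else undefined)"

text \<open>Correction operator \<open>C_s\<close>: \<open>P_0(s)\<close> on \<open>0_2\<close>, \<open>P_k(s)\<close> on \<open>k_1\<close> for
  \<open>k = 1..N\<close> (repeater nodes and end node \<open>N\<close>), identity elsewhere.\<close>
definition corr :: "nat \<Rightarrow> ((nat \<Rightarrow> bool \<times> bool) \<Rightarrow> nat \<Rightarrow> bool \<times> bool)
                     \<Rightarrow> (nat \<Rightarrow> bool \<times> bool) \<Rightarrow> (nat \<Rightarrow> qb2) \<Rightarrow> (nat \<Rightarrow> qb2) \<Rightarrow> complex" where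
  "corr N P s x y = (\<Prod>k\<in>{1..N}.
      (if k = 1 then pauli (P s 0) else pI) (fst (x k)) (fst (y k))
      * pauli (P s k) (snd (x k)) (snd (y k)))"

text \<open>\<open>\<Lambda>_{P,s}(\<rho>) = Tr_rep[(\<otimes>_k |\<Psi>_{s_k}><\<Psi>_{s_k}|) C_s \<rho> C_s^\<dagger>]\<close>.\<close>
definition bellrep :: "nat \<Rightarrow> (nat \<Rightarrow> bool \<times> bool) \<Rightarrow> (nat \<Rightarrow> qb2) \<Rightarrow> complex" where
  "bellrep N s R = (\<Prod>k\<in>{1..N-1}. bell (s k) (R k))"

definition conjC :: "nat \<Rightarrow> ((nat \<Rightarrow> bool \<times> bool) \<Rightarrow> nat \<Rightarrow> bool \<times> bool)
      \<Rightarrow> (nat \<Rightarrow> bool \<times> bool) \<Rightarrow> ((nat \<Rightarrow> qb2) \<Rightarrow> (nat \<Rightarrow> qb2) \<Rightarrow> complex)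
      \<Rightarrow> (nat \<Rightarrow> qb2) \<Rightarrow> (nat \<Rightarrow> qb2) \<Rightarrow> complex" where
  "conjC N P s \<rho> x x' = (\<Sum>y\<in>cfgs N. \<Sum>y'\<in>cfgs N.
      corr N P s x y * \<rho> y y' * cnj (corr N P s x' y'))"

definition lam_s :: "nat \<Rightarrow> ((nat \<Rightarrow> bool \<times> bool) \<Rightarrow> nat \<Rightarrow> bool \<times> bool)
      \<Rightarrow> (nat \<Rightarrow> bool \<times> bool) \<Rightarrow> ((nat \<Rightarrow> qb2) \<Rightarrow> (nat \<Rightarrow> qb2) \<Rightarrow> complex) \<Rightarrow> op2" where
  "lam_s N P s \<rho> o1 o2 = (\<Sum>R\<in>reps N. \<Sum>R'\<in>reps N.
      cnj (bellrep N s R) * conjC N P s \<rho> (cfg N (fst o1) (snd o1) R) (cfg N (fst o2) (snd o2) R')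
      * bellrep N s R')"

definition lam :: "nat \<Rightarrow> ((nat \<Rightarrow> bool \<times> bool) \<Rightarrow> nat \<Rightarrow> bool \<times> bool)
      \<Rightarrow> ((nat \<Rightarrow> qb2) \<Rightarrow> (nat \<Rightarrow> qb2) \<Rightarrow> complex) \<Rightarrow> op2" where
  "lam N P \<rho> o1 o2 = (\<Sum>s\<in>syns N. lam_s N P s \<rho> o1 o2)"

text \<open>Swap-and-correct protocol: \<open>P s k\<close> is the correction \<open>\<P>_k(s)\<close> at node \<open>k \<in> {0..N}\<close>.
  (A) causal order given by a permutation \<open>\<alpha>\<close> of \<open>{1..N-1}\<close>;
  (B) for every syndrome the normalised output from \<open>|\<Psi>_00><\<Psi>_00|^{\<otimes>N}\<close> is \<open>|\<Psi>_00><\<Psi>_00|\<close>.\<close>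
definition swap_protocol :: "nat \<Rightarrow> ((nat \<Rightarrow> bool \<times> bool) \<Rightarrow> nat \<Rightarrow> bool \<times> bool) \<Rightarrow> bool" where
  "swap_protocol N P \<longleftrightarrow>
     (\<exists>\<alpha>. bij_betw \<alpha> {1..N-1} {1..N-1} \<and>
        (\<forall>k\<in>{1..N-1}. \<forall>s\<in>syns N. \<forall>s'\<in>syns N.
           (\<forall>j\<in>{1..<k}. s (\<alpha> j) = s' (\<alpha> j)) \<longrightarrow> P s (\<alpha> k) = P s' (\<alpha> k)))
     \<and> (\<forall>s\<in>syns N.
          (\<lambda>i j. lam_s N P s (tens N (\<lambda>_. bellproj (False, False))) i j
                 / tr2 (lam_s N P s (tens N (\<lambda>_. bellproj (False, False)))))
          = bellproj (False, False))"

end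

theory Submission
  imports Defs
begin

text \<open>
  For a syndrome \<open>s\<close>, the fidelity of \<open>\<Lambda>_{P,s}(\<rho>)\<close> is \<open>\<langle>\<psi>_s|\<rho>|\<psi>_s\<rangle>\<close> with
  \<open>\<psi>_s = C_s^\<dagger> (\<Psi>_00 \<otimes> \<Psi>_{s_1} \<otimes> ... \<otimes> \<Psi>_{s_{N-1}})\<close>. Causality (A) makes the \<open>\<psi>_s\<close>
  orthonormal. A global Pauli \<open>\<sigma>_c^{\<otimes>2N}\<close> acts on a product of link Bell states
  \<open>\<Psi>_{a_1} \<otimes> ... \<otimes> \<Psi>_{a_N}\<close> by a sign that depends only on the label sum
  \<open>a_1 + ... + a_N\<close> in \<open>Z_2 \<times> Z_2\<close>, and it has every \<open>\<psi>_s\<close> as an eigenvector; by (B) the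
  eigenvalue is 1, so \<open>\<psi>_s\<close> lies in the span of the Bell products with label sum 0. That span
  has dimension \<open>4^{N-1}\<close>, the number of syndromes, so the \<open>\<psi>_s\<close> form a basis of it and
  \<open>F' = \<Sum>_{a_1+...+a_N=0} \<Prod>_k p_k(a_k)\<close>, the value at 0 of the convolution of the Bell-diagonal
  weights \<open>p_k\<close> of the \<open>\<rho>_k\<close>. Twirling replaces \<open>p_k\<close> by \<open>(F_k, (1-F_k)/3, (1-F_k)/3, (1-F_k)/3)\<close>.
  The partial Werner convolution is symmetric on the three non-zero labels, so against it a new
  factor only matters through its weight at 0; hence the deviation grows only through the non-zero
  labels, where both partial convolutions of \<open>n\<close> factors carry at most \<open>n \<epsilon>\<close>, by
  \<open>n \<epsilon> (1 - F_{n+1}) \<le> n \<epsilon>^2\<close>. Summing gives \<open>(N choose 2) \<epsilon>^2\<close> exactly, with no third-order term.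
\<close>

lemma sum_swap3:
  "(\<Sum>a\<in>A. \<Sum>b\<in>B. \<Sum>c\<in>C. f a b c) = (\<Sum>b\<in>B. \<Sum>c\<in>C. \<Sum>a\<in>A. f a b c)"
  by (subst sum.swap) (simp only: sum.swap[of _ A])

lemma sum_swap4:
  "(\<Sum>a\<in>A. \<Sum>b\<in>B. \<Sum>c\<in>C. \<Sum>d\<in>D. f a b c d) = (\<Sum>c\<in>C. \<Sum>d\<in>D. \<Sum>a\<in>A. \<Sum>b\<in>B. f a b c d)"
proof -
  have "(\<Sum>a\<in>A. \<Sum>b\<in>B. \<Sum>c\<in>C. \<Sum>d\<in>D. f a b c d) = (\<Sum>a\<in>A. \<Sum>c\<in>C. \<Sum>d\<in>D. \<Sum>b\<in>B. f a b c d)"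
    by (intro sum.cong refl) (rule sum_swap3)
  also have "\<dots> = (\<Sum>c\<in>C. \<Sum>d\<in>D. \<Sum>a\<in>A. \<Sum>b\<in>B. f a b c d)"
    by (rule sum_swap3)
  finally show ?thesis .
qed

lemma sum_PiE_insert:
  assumes "m \<notin> S" "finite S"
  shows "(\<Sum>a\<in>PiE (insert m S) T. f a) = (\<Sum>y\<in>T m. \<Sum>g\<in>PiE S T. f (g(m := y)))"
proof -
  have "(\<Sum>a\<in>PiE (insert m S) T. f a) = (\<Sum>yg\<in>T m \<times> PiE S T. f ((\<lambda>(y, g). g(m := y)) yg))"
    unfolding PiE_insert_eq by (rule sum.reindex[OF inj_combinator[OF assms(1)], unfolded comp_def])
  then show ?thesis by (simp add: sum.cartesian_product case_prod_beta)
qed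

lemma hermitian_idempotent_full_trace_eq_id:
  fixes Q :: "'a \<Rightarrow> 'a \<Rightarrow> complex"
  assumes fI: "finite I"
    and herm: "\<And>a b. cnj (Q a b) = Q b a"
    and idem: "\<And>a c. (\<Sum>b\<in>I. Q a b * Q b c) = Q a c"
    and trace: "(\<Sum>a\<in>I. Q a a) = of_nat (card I)"
    and a: "a \<in> I" and b: "b \<in> I"
  shows "Q a b = (if a = b then 1 else 0)"
proof -
  define r where "r a = (\<Sum>b\<in>I. (cmod (Q a b))\<^sup>2)" for a
  have Q_diag: "Q a a = of_real (r a)" for a
  proof -
    have "Q a a = (\<Sum>b\<in>I. Q a b * cnj (Q a b))" using idem[of a a] by (simp add: herm)
    also have "\<dots> = of_real (r a)"
      unfolding r_def of_real_sum by (intro sum.cong refl) (simp add: complex_norm_square[symmetric] del: of_real_power)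
    finally show ?thesis .
  qed
  have r_nonneg: "0 \<le> r a" for a unfolding r_def by (simp add: sum_nonneg)
  have r_le_1: "r a \<le> 1" if "a \<in> I" for a
  proof -
    have "(cmod (Q a a))\<^sup>2 \<le> r a" unfolding r_def using fI that by (intro member_le_sum) auto
    then have "r a * r a \<le> r a * 1" using Q_diag[of a] r_nonneg[of a] by (simp add: power2_eq_square)
    then show ?thesis using r_nonneg[of a] by (cases "r a = 0") auto
  qed
  have "complex_of_real (\<Sum>a\<in>I. r a) = complex_of_real (real (card I))"
    using trace by (simp add: Q_diag)
  then have "(\<Sum>a\<in>I. 1 - r a) = 0"
    unfolding of_real_eq_iff by (simp add: sum_subtractf)
  then have r_1: "r a = 1" if "a \<in> I" for a
    using sum_nonneg_eq_0_iff[OF fI, of "\<lambda>a. 1 - r a"] r_le_1 that by auto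
  show ?thesis
  proof (cases "a = b")
    case True
    then show ?thesis using Q_diag[of a] r_1[OF a] by simp
  next
    case False
    have "(\<Sum>b'\<in>{a, b}. (cmod (Q a b'))\<^sup>2) \<le> r a"
      unfolding r_def using fI a b by (intro sum_mono2) auto
    then have "1 + (cmod (Q a b))\<^sup>2 \<le> 1"
      using False Q_diag[of a] r_1[OF a] by simp
    then show ?thesis using False by simp
  qed
qed

lemma orthonormal_columns_imp_orthonormal_rows:
  fixes U :: "'a \<Rightarrow> 'b \<Rightarrow> complex"
  assumes fI: "finite I" and fS: "finite S" and card: "card I = card S"
    and orth: "\<And>s t. s \<in> S \<Longrightarrow> t \<in> S \<Longrightarrow> (\<Sum>a\<in>I. cnj (U a s) * U a t) = (if s = t then 1 else 0)"
    and a: "a \<in> I" and b: "b \<in> I"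
  shows "(\<Sum>s\<in>S. U a s * cnj (U b s)) = (if a = b then 1 else 0)"
proof -
  define Q where "Q a b = (\<Sum>s\<in>S. U a s * cnj (U b s))" for a b
  have idem: "(\<Sum>b\<in>I. Q a b * Q b c) = Q a c" for a c
  proof -
    have "(\<Sum>b\<in>I. Q a b * Q b c) = (\<Sum>b\<in>I. \<Sum>s\<in>S. \<Sum>t\<in>S. U a s * cnj (U c t) * (cnj (U b s) * U b t))"
      unfolding Q_def by (simp add: sum_distrib_left sum_distrib_right mult_ac)
    also have "\<dots> = (\<Sum>s\<in>S. \<Sum>t\<in>S. U a s * cnj (U c t) * (\<Sum>b\<in>I. cnj (U b s) * U b t))"
      unfolding sum_swap3[where A = I] by (simp add: sum_distrib_left)
    also have "\<dots> = Q a c"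
      unfolding Q_def using fS by (simp add: orth if_distrib cong: if_cong)
    finally show ?thesis .
  qed
  have "(\<Sum>a\<in>I. Q a a) = (\<Sum>s\<in>S. \<Sum>a\<in>I. cnj (U a s) * U a s)"
    unfolding Q_def by (subst sum.swap) (simp add: mult.commute)
  also have "\<dots> = of_nat (card I)" using card by (simp add: orth)
  finally have trace: "(\<Sum>a\<in>I. Q a a) = of_nat (card I)" .
  have "cnj (Q a b) = Q b a" for a b unfolding Q_def by (simp add: mult.commute)
  from hermitian_idempotent_full_trace_eq_id[OF fI this idem trace a b]
  show ?thesis unfolding Q_def .
qed

section \<open>Paulis and Bell states\<close>

definition adj1 :: "op1 \<Rightarrow> op1" where
  "adj1 M i j = cnj (M j i)"

definition xor2 :: "qb2 \<Rightarrow> qb2 \<Rightarrow> qb2" where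
  "xor2 x y = (fst x \<noteq> fst y, snd x \<noteq> snd y)"

text \<open>\<open>X^m Z^n\<close> and \<open>X^m' Z^n'\<close> anticommute iff \<open>m n' \<noteq> n m'\<close> (mod 2).\<close>
definition comm_sign :: "bool \<times> bool \<Rightarrow> bool \<times> bool \<Rightarrow> complex" where
  "comm_sign c a = (if (fst c \<and> snd a) \<noteq> (snd c \<and> fst a) then -1 else 1)"

lemma UNIV_qb2: "(UNIV :: qb2 set) = {(False,False), (False,True), (True,False), (True,True)}"
  by (auto simp: UNIV_bool)

lemma sum_qb2:
  "(\<Sum>x\<in>(UNIV :: qb2 set). f x) = f (False,False) + f (False,True) + f (True,False) + f (True,True)"
  by (simp add: UNIV_qb2 add.assoc)

lemma sum_bool: "(\<Sum>x\<in>(UNIV :: bool set). f x) = f False + f True"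
  by (simp add: UNIV_bool)

lemma sum_qb2_pairs: "(\<Sum>w\<in>(UNIV :: qb2 set). f w) = (\<Sum>u\<in>UNIV. \<Sum>v\<in>UNIV. f (u, v))"
  by (simp add: sum.cartesian_product)

lemma pauli_entry: "pauli s i j = (if i = (j \<noteq> fst s) then (if snd s \<and> j then -1 else 1) else 0)"
  by (cases s) (auto simp: pauli_def mmul1_def pX_def pZ_def pI_def UNIV_bool)

lemma cnj_pauli [simp]: "cnj (pauli s i j) = pauli s i j"
  by (simp add: pauli_entry)

lemma pauli_00: "pauli (False,False) = pI"
  by (intro ext) (auto simp: pauli_entry pI_def)

lemma pauli_unitary: "mmul1 (pauli a) (adj1 (pauli a)) = pI"
  by (intro ext, cases a) (auto simp: mmul1_def adj1_def sum_bool pauli_entry pI_def)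

lemma pauli_commute: "mmul1 (pauli c) (adj1 (pauli a)) i j = comm_sign c a * mmul1 (adj1 (pauli a)) (pauli c) i j"
  by (cases c; cases a; cases i; cases j) (simp_all add: mmul1_def adj1_def sum_bool pauli_entry comm_sign_def)

lemma pauli_mult_transpose: "pauli c i j * pauli c i' j' = pauli c j i * pauli c j' i'"
  by (cases c; cases i; cases j; cases i'; cases j') (simp_all add: pauli_entry)

lemma comm_sign_00: "comm_sign c (False,False) = 1"
  by (simp add: comm_sign_def)

lemma cnj_comm_sign [simp]: "cnj (comm_sign c a) = comm_sign c a"
  by (simp add: comm_sign_def)

lemma comm_sign_xor2: "comm_sign c (xor2 a b) = comm_sign c a * comm_sign c b"
  by (cases c; cases a; cases b) (auto simp: comm_sign_def xor2_def)

lemma comm_sign_separates: "b \<noteq> (False,False) \<Longrightarrow> \<exists>c. comm_sign c b = -1"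
  by (cases b) (auto simp: comm_sign_def)

lemma sum_pI_pI: "(\<Sum>w\<in>UNIV. pI u (fst w) * pI v (snd w) * f w) = f (u, v)"
  unfolding sum_qb2 by (cases u; cases v) (simp_all add: pI_def)

lemma bell_entry: "bell s x = pauli s (snd x) (fst x) / complex_of_real (sqrt 2)"
  by (cases x; cases "fst x") (simp_all add: bell_def sum_bool pI_def phi0_def divide_inverse)

lemma cnj_bell_mult_bell:
  "cnj (bell a r) * bell b r' = pauli a (snd r) (fst r) * pauli b (snd r') (fst r') / 2"
  "bell a r * cnj (bell b r') = pauli a (snd r) (fst r) * pauli b (snd r') (fst r') / 2"
proof -
  have two: "complex_of_real (sqrt 2) * complex_of_real (sqrt 2) = 2"
    by (simp flip: of_real_mult)
  show "cnj (bell a r) * bell b r' = pauli a (snd r) (fst r) * pauli b (snd r') (fst r') / 2"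
    "bell a r * cnj (bell b r') = pauli a (snd r) (fst r) * pauli b (snd r') (fst r') / 2"
    unfolding bell_entry by (simp_all add: two)
qed

lemma bell_orthonormal: "(\<Sum>r\<in>UNIV. cnj (bell a r) * bell b r) = (if a = b then 1 else 0)"
  unfolding cnj_bell_mult_bell sum_qb2 by (cases a; cases b) (simp_all add: pauli_entry)

lemma bell_complete: "(\<Sum>b\<in>UNIV. bell b i * cnj (bell b j)) = (if i = j then 1 else 0)"
  unfolding cnj_bell_mult_bell sum_qb2 by (cases i; cases j) (simp_all add: pauli_entry)

lemma pauli_pair_bell:
  "(\<Sum>w\<in>UNIV. pauli c u (fst w) * pauli c v (snd w) * bell a w) = comm_sign c a * bell a (u, v)"
proof -
  have "(\<Sum>w\<in>UNIV. pauli c u (fst w) * pauli c v (snd w) * pauli a (snd w) (fst w)) = comm_sign c a * pauli a v u"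
    unfolding sum_qb2 by (cases c; cases a; cases u; cases v) (simp_all add: pauli_entry comm_sign_def)
  then show ?thesis
    unfolding bell_entry by (simp add: sum_divide_distrib[symmetric] mult.assoc)
qed

lemma fid_bellproj: "fid (bellproj (False,False)) = 1"
proof -
  have "fid (bellproj (False,False)) = (\<Sum>i\<in>UNIV. cnj (bell (False,False) i) * bell (False,False) i) *
     (\<Sum>j\<in>UNIV. cnj (bell (False,False) j) * bell (False,False) j)"
    by (simp add: fid_def bellproj_def sum_product mult_ac)
  then show ?thesis by (simp add: bell_orthonormal)
qed

lemma finite_cfgs [simp]: "finite (cfgs N)"
  unfolding cfgs_def by (intro finite_PiE) auto

lemma finite_syns [simp]: "finite (syns N)"
  unfolding syns_def by (intro finite_PiE) auto

lemma sum_cfgs_prod: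
  fixes f :: "nat \<Rightarrow> qb2 \<Rightarrow> 'a :: comm_semiring_1"
  shows "(\<Sum>z\<in>cfgs N. \<Prod>k\<in>{1..N}. f k (z k)) = (\<Prod>k\<in>{1..N}. \<Sum>w\<in>UNIV. f k w)"
  unfolding cfgs_def using prod_sum_PiE[of "{1..N}" "\<lambda>_. UNIV" f] by simp

definition prod_op :: "nat \<Rightarrow> (nat \<Rightarrow> op1) \<Rightarrow> (nat \<Rightarrow> op1) \<Rightarrow> (nat \<Rightarrow> qb2) \<Rightarrow> (nat \<Rightarrow> qb2) \<Rightarrow> complex" where
  "prod_op N \<alpha> \<beta> x y = (\<Prod>k\<in>{1..N}. \<alpha> k (fst (x k)) (fst (y k)) * \<beta> k (snd (x k)) (snd (y k)))"

lemma prod_op_mult: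
  "(\<Sum>z\<in>cfgs N. prod_op N \<alpha> \<beta> x z * prod_op N \<alpha>' \<beta>' z y) =
   prod_op N (\<lambda>k. mmul1 (\<alpha> k) (\<alpha>' k)) (\<lambda>k. mmul1 (\<beta> k) (\<beta>' k)) x y"
proof -
  have "(\<Sum>z\<in>cfgs N. prod_op N \<alpha> \<beta> x z * prod_op N \<alpha>' \<beta>' z y) =
    (\<Sum>z\<in>cfgs N. \<Prod>k\<in>{1..N}. (\<alpha> k (fst (x k)) (fst (z k)) * \<alpha>' k (fst (z k)) (fst (y k))) *
        (\<beta> k (snd (x k)) (snd (z k)) * \<beta>' k (snd (z k)) (snd (y k))))"
    unfolding prod_op_def prod.distrib[symmetric] by (simp add: mult_ac)
  also have "\<dots> = (\<Prod>k\<in>{1..N}. \<Sum>w\<in>UNIV. (\<alpha> k (fst (x k)) (fst w) * \<alpha>' k (fst w) (fst (y k))) *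
        (\<beta> k (snd (x k)) (snd w) * \<beta>' k (snd w) (snd (y k))))"
    by (rule sum_cfgs_prod)
  also have "\<dots> = prod_op N (\<lambda>k. mmul1 (\<alpha> k) (\<alpha>' k)) (\<lambda>k. mmul1 (\<beta> k) (\<beta>' k)) x y"
    unfolding prod_op_def mmul1_def
    by (intro prod.cong refl, subst sum_qb2_pairs) (simp add: sum_product)
  finally show ?thesis .
qed

lemma cnj_prod_op: "cnj (prod_op N \<alpha> \<beta> x y) = prod_op N (\<lambda>k. adj1 (\<alpha> k)) (\<lambda>k. adj1 (\<beta> k)) y x"
  unfolding prod_op_def adj1_def by simp

lemma prod_op_scale:
  "prod_op N (\<lambda>k i j. a k * \<alpha> k i j) (\<lambda>k i j. b k * \<beta> k i j) x y =
   (\<Prod>k\<in>{1..N}. a k * b k) * prod_op N \<alpha> \<beta> x y"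
  unfolding prod_op_def by (simp add: prod.distrib mult_ac)

definition link_vec :: "nat \<Rightarrow> (nat \<Rightarrow> qb2 \<Rightarrow> complex) \<Rightarrow> (nat \<Rightarrow> qb2) \<Rightarrow> complex" where
  "link_vec N \<phi> y = (\<Prod>k\<in>{1..N}. \<phi> k (y k))"

lemma prod_op_link_vec:
  "(\<Sum>y\<in>cfgs N. prod_op N \<alpha> \<beta> x y * link_vec N \<phi> y) =
    link_vec N (\<lambda>k (u, v). \<Sum>w\<in>UNIV. \<alpha> k u (fst w) * \<beta> k v (snd w) * \<phi> k w) x"
proof -
  have "(\<Sum>y\<in>cfgs N. prod_op N \<alpha> \<beta> x y * link_vec N \<phi> y) =
     (\<Sum>y\<in>cfgs N. \<Prod>k\<in>{1..N}. \<alpha> k (fst (x k)) (fst (y k)) * \<beta> k (snd (x k)) (snd (y k)) * \<phi> k (y k))"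
    unfolding prod_op_def link_vec_def by (simp add: prod.distrib)
  also have "\<dots> = (\<Prod>k\<in>{1..N}. \<Sum>w\<in>UNIV. \<alpha> k (fst (x k)) (fst w) * \<beta> k (snd (x k)) (snd w) * \<phi> k w)"
    by (rule sum_cfgs_prod)
  finally show ?thesis unfolding link_vec_def by (simp add: case_prod_beta)
qed

text \<open>In a configuration \<open>y\<close>, repeater node \<open>k\<close> holds \<open>k_1 = snd (y k)\<close> and \<open>k_2 = fst (y (k+1))\<close>;
  the end nodes hold \<open>0_2 = fst (y 1)\<close> and \<open>N_1 = snd (y N)\<close>.\<close>
definition node_vec :: "nat \<Rightarrow> (qb2 \<Rightarrow> complex) \<Rightarrow> (nat \<Rightarrow> qb2 \<Rightarrow> complex) \<Rightarrow> (nat \<Rightarrow> qb2) \<Rightarrow> complex" where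
  "node_vec N e h y = e (fst (y 1), snd (y N)) * (\<Prod>k\<in>{1..N-1}. h k (snd (y k), fst (y (Suc k))))"

definition split_cfg :: "nat \<Rightarrow> (nat \<Rightarrow> qb2) \<Rightarrow> qb2 \<times> (nat \<Rightarrow> qb2)" where
  "split_cfg N x = ((fst (x 1), snd (x N)),
     \<lambda>k. if k \<in> {1..N-1} then (snd (x k), fst (x (Suc k))) else undefined)"

lemma bij_betw_cfg:
  assumes N: "N \<ge> 2"
  shows "bij_betw (\<lambda>(ob, R). cfg N (fst ob) (snd ob) R) (UNIV \<times> reps N) (cfgs N)"
proof (rule bij_betw_byWitness[where f' = "split_cfg N"])
  show "\<forall>oR\<in>UNIV \<times> reps N. split_cfg N ((\<lambda>(ob, R). cfg N (fst ob) (snd ob) R) oR) = oR"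
  proof (clarify)
    fix u v R assume R: "R \<in> reps N"
    have "(\<lambda>k. if k \<in> {1..N-1} then (snd (cfg N u v R k), fst (cfg N u v R (Suc k))) else undefined) = R"
    proof
      fix k
      show "(if k \<in> {1..N-1} then (snd (cfg N u v R k), fst (cfg N u v R (Suc k))) else undefined) = R k"
        using R N by (auto simp: cfg_def reps_def PiE_def extensional_def)
    qed
    then show "split_cfg N (cfg N (fst (u, v)) (snd (u, v)) R) = ((u, v), R)"
      using N by (simp add: split_cfg_def cfg_def)
  qed
  show "\<forall>x\<in>cfgs N. (\<lambda>(ob, R). cfg N (fst ob) (snd ob) R) (split_cfg N x) = x"
  proof (intro ballI ext)
    fix x k assume "x \<in> cfgs N"
    then show "(\<lambda>(ob, R). cfg N (fst ob) (snd ob) R) (split_cfg N x) k = x k"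
      using N by (cases "k \<in> {1..N}") (auto simp: split_cfg_def cfg_def cfgs_def PiE_def extensional_def prod_eq_iff)
  qed
qed (auto simp: cfgs_def cfg_def reps_def split_cfg_def PiE_def extensional_def)

lemma sum_cfgs_split:
  assumes N: "N \<ge> 2"
  shows "(\<Sum>x\<in>cfgs N. f x) = (\<Sum>ob\<in>UNIV. \<Sum>R\<in>reps N. f (cfg N (fst ob) (snd ob) R))"
  using sum.reindex_bij_betw[OF bij_betw_cfg[OF N], of f]
  by (simp add: sum.cartesian_product case_prod_beta)

lemma node_vec_cfg:
  assumes N: "N \<ge> 2"
  shows "node_vec N e h (cfg N (fst ob) (snd ob) R) = e ob * (\<Prod>k\<in>{1..N-1}. h k (R k))"
  using N by (auto simp: node_vec_def cfg_def intro!: prod.cong)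

lemma sum_node_vec:
  assumes N: "N \<ge> 2"
  shows "(\<Sum>x\<in>cfgs N. node_vec N e h x) = (\<Sum>ob\<in>UNIV. e ob) * (\<Prod>k\<in>{1..N-1}. \<Sum>r\<in>UNIV. h k r)"
proof -
  have "(\<Sum>x\<in>cfgs N. node_vec N e h x) = (\<Sum>ob\<in>UNIV. e ob) * (\<Sum>R\<in>reps N. \<Prod>k\<in>{1..N-1}. h k (R k))"
    unfolding sum_cfgs_split[OF N] node_vec_cfg[OF N] by (simp add: sum_product)
  also have "(\<Sum>R\<in>reps N. \<Prod>k\<in>{1..N-1}. h k (R k)) = (\<Prod>k\<in>{1..N-1}. \<Sum>r\<in>UNIV. h k r)"
    unfolding reps_def using prod_sum_PiE[of "{1..N-1}" "\<lambda>_. UNIV" h] by simp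
  finally show ?thesis .
qed

lemma node_vec_inner:
  assumes N: "N \<ge> 2"
  shows "(\<Sum>x\<in>cfgs N. cnj (node_vec N e h x) * node_vec N e' h' x) =
    (\<Sum>ob\<in>UNIV. cnj (e ob) * e' ob) * (\<Prod>k\<in>{1..N-1}. \<Sum>r\<in>UNIV. cnj (h k r) * h' k r)"
proof -
  have "cnj (node_vec N e h x) * node_vec N e' h' x =
      node_vec N (\<lambda>ob. cnj (e ob) * e' ob) (\<lambda>k r. cnj (h k r) * h' k r) x" for x
    unfolding node_vec_def by (simp add: prod.distrib mult_ac)
  then show ?thesis by (simp add: sum_node_vec[OF N])
qed

lemma node_vec_scale:
  "node_vec N (\<lambda>ob. a * e ob) (\<lambda>k r. b k * h k r) x = (a * (\<Prod>k\<in>{1..N-1}. b k)) * node_vec N e h x"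
  unfolding node_vec_def by (simp add: prod.distrib mult_ac)

lemma prod_links_as_nodes:
  assumes N: "N \<ge> 2"
  shows "(\<Prod>k\<in>{1..N}. f k (fst (x k)) * g k (snd (x k))) =
    (f 1 (fst (x 1)) * g N (snd (x N))) * (\<Prod>k\<in>{1..N-1}. g k (snd (x k)) * f (Suc k) (fst (x (Suc k))))"
proof -
  obtain M where M: "N = Suc M" using N by (cases N) auto
  have "(\<Prod>k\<in>{Suc 1..Suc M}. f k (fst (x k))) = (\<Prod>k\<in>{1..M}. f (Suc k) (fst (x (Suc k))))"
    by (rule prod.shift_bounds_cl_Suc_ivl)
  moreover have "{1..Suc M} = insert 1 {Suc 1..Suc M}" by auto
  ultimately have f: "(\<Prod>k\<in>{1..N}. f k (fst (x k))) = f 1 (fst (x 1)) * (\<Prod>k\<in>{1..M}. f (Suc k) (fst (x (Suc k))))"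
    unfolding M by simp
  have g: "(\<Prod>k\<in>{1..N}. g k (snd (x k))) = (\<Prod>k\<in>{1..M}. g k (snd (x k))) * g N (snd (x N))"
    unfolding M by simp
  show ?thesis unfolding prod.distrib f g using M by (simp add: mult_ac)
qed

lemma prod_op_node_vec:
  assumes N: "N \<ge> 2"
  shows "(\<Sum>y\<in>cfgs N. prod_op N \<alpha> \<beta> x y * node_vec N e h y) =
    node_vec N (\<lambda>(u, v). \<Sum>ob\<in>UNIV. \<alpha> 1 u (fst ob) * \<beta> N v (snd ob) * e ob)
              (\<lambda>k (u, v). \<Sum>r\<in>UNIV. \<beta> k u (fst r) * \<alpha> (Suc k) v (snd r) * h k r) x"
proof -
  have "prod_op N \<alpha> \<beta> x y * node_vec N e h y = node_vec N
      (\<lambda>ob. \<alpha> 1 (fst (x 1)) (fst ob) * \<beta> N (snd (x N)) (snd ob) * e ob)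
      (\<lambda>k r. \<beta> k (snd (x k)) (fst r) * \<alpha> (Suc k) (fst (x (Suc k))) (snd r) * h k r) y" for y
    unfolding prod_op_def node_vec_def
      prod_links_as_nodes[OF N, of "\<lambda>k u. \<alpha> k (fst (x k)) u" y "\<lambda>k v. \<beta> k (snd (x k)) v"]
    by (simp add: prod.distrib mult_ac)
  then show ?thesis
    by (simp add: sum_node_vec[OF N]) (simp add: node_vec_def case_prod_beta)
qed

section \<open>The measurement vectors of a protocol\<close>

definition ideal_vec :: "nat \<Rightarrow> (nat \<Rightarrow> bool \<times> bool) \<Rightarrow> (nat \<Rightarrow> qb2) \<Rightarrow> complex" where
  "ideal_vec N s = node_vec N (bell (False,False)) (\<lambda>k. bell (s k))"

definition corr_left :: "((nat \<Rightarrow> bool \<times> bool) \<Rightarrow> nat \<Rightarrow> bool \<times> bool) \<Rightarrow> (nat \<Rightarrow> bool \<times> bool) \<Rightarrow> nat \<Rightarrow> op1" where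
  "corr_left P s k = pauli (if k = 1 then P s 0 else (False,False))"

definition corr_right :: "((nat \<Rightarrow> bool \<times> bool) \<Rightarrow> nat \<Rightarrow> bool \<times> bool) \<Rightarrow> (nat \<Rightarrow> bool \<times> bool) \<Rightarrow> nat \<Rightarrow> op1" where
  "corr_right P s k = pauli (P s k)"

lemma corr_eq_prod_op: "corr N P s = prod_op N (corr_left P s) (corr_right P s)"
  unfolding corr_def prod_op_def corr_left_def corr_right_def by (intro ext prod.cong refl) (simp add: pauli_00)

text \<open>\<open>meas_vec N P s = C_s^\<dagger> (\<Psi>_00 \<otimes> \<Psi>_{s_1} \<otimes> ... \<otimes> \<Psi>_{s_{N-1}})\<close>, with \<open>\<Psi>_00\<close> on the
  end qubits \<open>(0_2, N_1)\<close> and \<open>\<Psi>_{s_k}\<close> on \<open>(k_1, k_2)\<close>.\<close>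
definition meas_vec :: "nat \<Rightarrow> ((nat \<Rightarrow> bool \<times> bool) \<Rightarrow> nat \<Rightarrow> bool \<times> bool) \<Rightarrow> (nat \<Rightarrow> bool \<times> bool) \<Rightarrow> (nat \<Rightarrow> qb2) \<Rightarrow> complex" where
  "meas_vec N P s y = (\<Sum>x\<in>cfgs N. ideal_vec N s x * cnj (corr N P s x y))"

definition adj_corr :: "nat \<Rightarrow> ((nat \<Rightarrow> bool \<times> bool) \<Rightarrow> nat \<Rightarrow> bool \<times> bool) \<Rightarrow> (nat \<Rightarrow> bool \<times> bool)
      \<Rightarrow> (nat \<Rightarrow> qb2) \<Rightarrow> (nat \<Rightarrow> qb2) \<Rightarrow> complex" where
  "adj_corr N P s = prod_op N (\<lambda>k. adj1 (corr_left P s k)) (\<lambda>k. adj1 (corr_right P s k))"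

lemma meas_vec_eq_adj_corr:
  "meas_vec N P s z = (\<Sum>x\<in>cfgs N. adj_corr N P s z x * ideal_vec N s x)"
  unfolding meas_vec_def adj_corr_def corr_eq_prod_op cnj_prod_op by (simp add: mult_ac)

lemma fid_lam_s_meas_vec:
  assumes N: "N \<ge> 2"
  shows "fid (lam_s N P s \<rho>) = (\<Sum>y\<in>cfgs N. \<Sum>y'\<in>cfgs N. cnj (meas_vec N P s y) * \<rho> y y' * meas_vec N P s y')"
proof -
  let ?b = "bell (False,False)"
  have "fid (lam_s N P s \<rho>) = (\<Sum>i\<in>UNIV. \<Sum>j\<in>UNIV. \<Sum>R\<in>reps N. \<Sum>R'\<in>reps N.
      cnj (?b i * bellrep N s R) * conjC N P s \<rho> (cfg N (fst i) (snd i) R) (cfg N (fst j) (snd j) R') * (?b j * bellrep N s R'))"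
    unfolding fid_def lam_s_def by (simp add: sum_distrib_left sum_distrib_right mult_ac)
  also have "\<dots> = (\<Sum>i\<in>UNIV. \<Sum>R\<in>reps N. \<Sum>j\<in>UNIV. \<Sum>R'\<in>reps N.
      cnj (?b i * bellrep N s R) * conjC N P s \<rho> (cfg N (fst i) (snd i) R) (cfg N (fst j) (snd j) R') * (?b j * bellrep N s R'))"
    by (intro sum.cong refl) (rule sum.swap)
  also have "\<dots> = (\<Sum>x\<in>cfgs N. \<Sum>x'\<in>cfgs N. cnj (ideal_vec N s x) * conjC N P s \<rho> x x' * ideal_vec N s x')"
    unfolding sum_cfgs_split[OF N]
    by (intro sum.cong refl) (simp add: ideal_vec_def node_vec_cfg[OF N] bellrep_def)
  also have "\<dots> = (\<Sum>x\<in>cfgs N. \<Sum>x'\<in>cfgs N. \<Sum>y\<in>cfgs N. \<Sum>y'\<in>cfgs N.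
       cnj (ideal_vec N s x) * corr N P s x y * \<rho> y y' * (ideal_vec N s x' * cnj (corr N P s x' y')))"
    unfolding conjC_def by (simp add: sum_distrib_left sum_distrib_right mult_ac)
  also have "\<dots> = (\<Sum>y\<in>cfgs N. \<Sum>y'\<in>cfgs N. \<Sum>x\<in>cfgs N. \<Sum>x'\<in>cfgs N.
       cnj (ideal_vec N s x) * corr N P s x y * \<rho> y y' * (ideal_vec N s x' * cnj (corr N P s x' y')))"
    by (rule sum_swap4)
  also have "\<dots> = (\<Sum>y\<in>cfgs N. \<Sum>y'\<in>cfgs N. cnj (meas_vec N P s y) * \<rho> y y' * meas_vec N P s y')"
    unfolding meas_vec_def by (simp add: sum_distrib_left sum_distrib_right mult_ac)
  finally show ?thesis .
qed

lemma meas_vec_inner: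
  assumes N: "N \<ge> 2"
  shows "(\<Sum>y\<in>cfgs N. cnj (meas_vec N P s y) * meas_vec N P t y) =
    (\<Sum>ob\<in>UNIV. cnj (bell (False,False) ob) *
        (\<Sum>ob'\<in>UNIV. mmul1 (corr_left P s 1) (adj1 (corr_left P t 1)) (fst ob) (fst ob')
           * mmul1 (corr_right P s N) (adj1 (corr_right P t N)) (snd ob) (snd ob') * bell (False,False) ob')) *
    (\<Prod>k\<in>{1..N-1}. \<Sum>r\<in>UNIV. cnj (bell (s k) r) *
        (\<Sum>r'\<in>UNIV. mmul1 (corr_right P s k) (adj1 (corr_right P t k)) (fst r) (fst r')
           * mmul1 (corr_left P s (Suc k)) (adj1 (corr_left P t (Suc k))) (snd r) (snd r') * bell (t k) r'))"
proof -
  let ?M = "prod_op N (\<lambda>k. mmul1 (corr_left P s k) (adj1 (corr_left P t k)))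
                      (\<lambda>k. mmul1 (corr_right P s k) (adj1 (corr_right P t k)))"
  have M: "(\<Sum>y\<in>cfgs N. corr N P s x y * cnj (corr N P t x' y)) = ?M x x'" for x x'
    unfolding corr_eq_prod_op cnj_prod_op prod_op_mult ..
  have "(\<Sum>y\<in>cfgs N. cnj (meas_vec N P s y) * meas_vec N P t y) =
      (\<Sum>y\<in>cfgs N. \<Sum>x\<in>cfgs N. \<Sum>x'\<in>cfgs N. cnj (ideal_vec N s x) * (corr N P s x y * cnj (corr N P t x' y) * ideal_vec N t x'))"
    unfolding meas_vec_def by (simp add: sum_distrib_left sum_distrib_right mult_ac)
  also have "\<dots> = (\<Sum>x\<in>cfgs N. \<Sum>x'\<in>cfgs N. \<Sum>y\<in>cfgs N. cnj (ideal_vec N s x) * (corr N P s x y * cnj (corr N P t x' y) * ideal_vec N t x'))"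
    by (rule sum_swap3)
  also have "\<dots> = (\<Sum>x\<in>cfgs N. cnj (ideal_vec N s x) * (\<Sum>x'\<in>cfgs N. ?M x x' * ideal_vec N t x'))"
  proof (intro sum.cong refl)
    fix x
    have "(\<Sum>x'\<in>cfgs N. \<Sum>y\<in>cfgs N. cnj (ideal_vec N s x) * (corr N P s x y * cnj (corr N P t x' y) * ideal_vec N t x')) =
      cnj (ideal_vec N s x) * (\<Sum>x'\<in>cfgs N. (\<Sum>y\<in>cfgs N. corr N P s x y * cnj (corr N P t x' y)) * ideal_vec N t x')"
      by (simp add: sum_distrib_left sum_distrib_right mult_ac)
    then show "(\<Sum>x'\<in>cfgs N. \<Sum>y\<in>cfgs N. cnj (ideal_vec N s x) * (corr N P s x y * cnj (corr N P t x' y) * ideal_vec N t x')) =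
      cnj (ideal_vec N s x) * (\<Sum>x'\<in>cfgs N. ?M x x' * ideal_vec N t x')"
      unfolding M .
  qed
  also have "\<dots> = (\<Sum>x\<in>cfgs N. cnj (ideal_vec N s x) * node_vec N
     (\<lambda>(u, v). \<Sum>ob'\<in>UNIV. mmul1 (corr_left P s 1) (adj1 (corr_left P t 1)) u (fst ob')
        * mmul1 (corr_right P s N) (adj1 (corr_right P t N)) v (snd ob') * bell (False,False) ob')
     (\<lambda>k (u, v). \<Sum>r'\<in>UNIV. mmul1 (corr_right P s k) (adj1 (corr_right P t k)) u (fst r')
        * mmul1 (corr_left P s (Suc k)) (adj1 (corr_left P t (Suc k))) v (snd r') * bell (t k) r') x)"
    unfolding ideal_vec_def prod_op_node_vec[OF N] ..
  finally show ?thesis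
    unfolding ideal_vec_def node_vec_inner[OF N] by (simp add: case_prod_beta)
qed

text \<open>Causality (A): at the first syndrome position (in the order \<open>\<alpha>\<close>) where \<open>s\<close> and \<open>t\<close> differ,
  the corrections still agree.\<close>
lemma swap_protocol_first_difference:
  assumes sp: "swap_protocol N P" and s: "s \<in> syns N" and t: "t \<in> syns N" and st: "s \<noteq> t"
  shows "\<exists>k\<in>{1..N-1}. P s k = P t k \<and> s k \<noteq> t k"
proof -
  obtain \<alpha> where bij: "bij_betw \<alpha> {1..N-1} {1..N-1}" and
    caus: "\<forall>k\<in>{1..N-1}. \<forall>s\<in>syns N. \<forall>s'\<in>syns N.
           (\<forall>j\<in>{1..<k}. s (\<alpha> j) = s' (\<alpha> j)) \<longrightarrow> P s (\<alpha> k) = P s' (\<alpha> k)"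
    using sp unfolding swap_protocol_def by blast
  define M where "M = {m \<in> {1..N-1}. s (\<alpha> m) \<noteq> t (\<alpha> m)}"
  obtain j where j: "j \<in> {1..N-1}" "s j \<noteq> t j"
    using st PiE_ext[of s "{1..N-1}" "\<lambda>_. UNIV" t] s t unfolding syns_def by blast
  then obtain m where "m \<in> {1..N-1}" "\<alpha> m = j"
    using bij unfolding bij_betw_def by (metis imageE)
  then have "m \<in> M" using j unfolding M_def by simp
  then have fin: "finite M" "M \<noteq> {}" unfolding M_def by auto
  define m0 where "m0 = Min M"
  have m0: "m0 \<in> M" unfolding m0_def using fin by (rule Min_in)
  have "s (\<alpha> i) = t (\<alpha> i)" if "i \<in> {1..<m0}" for i
  proof -
    have "i \<notin> M" using that fin m0_def by (meson Min_le atLeastLessThan_iff not_le)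
    then show ?thesis using that m0 unfolding M_def by auto
  qed
  moreover have m0_range: "m0 \<in> {1..N-1}" using m0 unfolding M_def by simp
  ultimately have "P s (\<alpha> m0) = P t (\<alpha> m0)" using caus s t by blast
  moreover have "\<alpha> m0 \<in> {1..N-1}" using bij m0_range by (auto simp: bij_betw_def)
  ultimately show ?thesis using m0 unfolding M_def by blast
qed

lemma meas_vec_orthonormal:
  assumes N: "N \<ge> 2" and sp: "swap_protocol N P" and s: "s \<in> syns N" and t: "t \<in> syns N"
  shows "(\<Sum>y\<in>cfgs N. cnj (meas_vec N P s y) * meas_vec N P t y) = (if s = t then 1 else 0)"
proof (cases "s = t")
  case True
  have unitary: "mmul1 (corr_left P t k) (adj1 (corr_left P t k)) = pI"
    "mmul1 (corr_right P t k) (adj1 (corr_right P t k)) = pI" for k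
    unfolding corr_left_def corr_right_def by (rule pauli_unitary)+
  show ?thesis unfolding meas_vec_inner[OF N] True unitary sum_pI_pI by (simp add: bell_orthonormal)
next
  case False
  obtain k where k: "k \<in> {1..N-1}" "P s k = P t k" "s k \<noteq> t k"
    using swap_protocol_first_difference[OF sp s t False] by blast
  have unitary: "mmul1 (corr_left P s (Suc k)) (adj1 (corr_left P t (Suc k))) = pI"
    "mmul1 (corr_right P s k) (adj1 (corr_right P t k)) = pI"
    using k(1) unfolding corr_left_def corr_right_def k(2) by (simp_all add: pauli_unitary)
  have "(\<Sum>r\<in>UNIV. cnj (bell (s k) r) *
        (\<Sum>r'\<in>UNIV. mmul1 (corr_right P s k) (adj1 (corr_right P t k)) (fst r) (fst r')
          * mmul1 (corr_left P s (Suc k)) (adj1 (corr_left P t (Suc k))) (snd r) (snd r') * bell (t k) r')) = 0"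
    unfolding unitary sum_pI_pI using k(3) by (simp add: bell_orthonormal)
  then have "(\<Prod>k\<in>{1..N-1}. \<Sum>r\<in>UNIV. cnj (bell (s k) r) *
        (\<Sum>r'\<in>UNIV. mmul1 (corr_right P s k) (adj1 (corr_right P t k)) (fst r) (fst r')
          * mmul1 (corr_left P s (Suc k)) (adj1 (corr_left P t (Suc k))) (snd r) (snd r') * bell (t k) r')) = 0"
    using k(1) by (intro prod_zero) auto
  then show ?thesis unfolding meas_vec_inner[OF N] using False by simp
qed

section \<open>The global Pauli symmetry\<close>

primrec label_sum :: "(nat \<Rightarrow> qb2) \<Rightarrow> nat \<Rightarrow> qb2" where
  "label_sum a 0 = (False,False)"
| "label_sum a (Suc n) = xor2 (label_sum a n) (a (Suc n))"

lemma label_sum_cong: "(\<And>k. k \<in> {1..n} \<Longrightarrow> a k = b k) \<Longrightarrow> label_sum a n = label_sum b n"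
  by (induction n) auto

definition global_pauli :: "nat \<Rightarrow> qb2 \<Rightarrow> (nat \<Rightarrow> qb2) \<Rightarrow> (nat \<Rightarrow> qb2) \<Rightarrow> complex" where
  "global_pauli N c = prod_op N (\<lambda>_. pauli c) (\<lambda>_. pauli c)"

definition bell_prod :: "nat \<Rightarrow> (nat \<Rightarrow> qb2) \<Rightarrow> (nat \<Rightarrow> qb2) \<Rightarrow> complex" where
  "bell_prod N a = link_vec N (\<lambda>k. bell (a k))"

definition chain_inner :: "nat \<Rightarrow> ((nat \<Rightarrow> qb2) \<Rightarrow> complex) \<Rightarrow> ((nat \<Rightarrow> qb2) \<Rightarrow> complex) \<Rightarrow> complex" where
  "chain_inner N f g = (\<Sum>y\<in>cfgs N. cnj (f y) * g y)"

lemma prod_comm_sign: "(\<Prod>k\<in>{1..n}. comm_sign c (a k)) = comm_sign c (label_sum a n)"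
  by (induction n) (simp_all add: comm_sign_00 comm_sign_xor2 prod.cl_ivl_Suc)

lemma global_pauli_bell_prod:
  "(\<Sum>y\<in>cfgs N. global_pauli N c x y * bell_prod N a y) = comm_sign c (label_sum a N) * bell_prod N a x"
  unfolding global_pauli_def bell_prod_def prod_op_link_vec prod_comm_sign[symmetric]
  unfolding link_vec_def by (simp add: case_prod_beta pauli_pair_bell prod.distrib)

lemma cnj_global_pauli: "cnj (global_pauli N c y z) = global_pauli N c z y"
  unfolding global_pauli_def prod_op_def cnj_prod by (intro prod.cong refl) (simp add: pauli_mult_transpose)

lemma global_pauli_ideal_vec:
  assumes N: "N \<ge> 2"
  shows "(\<Sum>x\<in>cfgs N. global_pauli N c z x * ideal_vec N s x) = (\<Prod>k\<in>{1..N-1}. comm_sign c (s k)) * ideal_vec N s z"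
proof -
  have "(\<lambda>(u, v). comm_sign c (False,False) * bell (False,False) (u, v)) = bell (False,False)"
    "(\<lambda>k (u, v). comm_sign c (s k) * bell (s k) (u, v)) = (\<lambda>k r. comm_sign c (s k) * bell (s k) r)"
    by (auto simp: fun_eq_iff comm_sign_00)
  then have "(\<Sum>x\<in>cfgs N. global_pauli N c z x * ideal_vec N s x) =
      node_vec N (\<lambda>ob. 1 * bell (False,False) ob) (\<lambda>k r. comm_sign c (s k) * bell (s k) r) z"
    unfolding global_pauli_def ideal_vec_def prod_op_node_vec[OF N] by (simp add: case_prod_beta pauli_pair_bell)
  then show ?thesis unfolding node_vec_scale ideal_vec_def by simp
qed

lemma global_pauli_adj_corr:
  "(\<Sum>z\<in>cfgs N. global_pauli N c y z * adj_corr N P s z x) =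
   (\<Prod>k\<in>{1..N}. comm_sign c (if k = 1 then P s 0 else (False,False)) * comm_sign c (P s k)) *
   (\<Sum>z\<in>cfgs N. adj_corr N P s y z * global_pauli N c z x)"
proof -
  have "prod_op N (\<lambda>k. mmul1 (pauli c) (adj1 (corr_left P s k))) (\<lambda>k. mmul1 (pauli c) (adj1 (corr_right P s k))) y x =
    prod_op N (\<lambda>k i j. comm_sign c (if k = 1 then P s 0 else (False,False)) * mmul1 (adj1 (corr_left P s k)) (pauli c) i j)
      (\<lambda>k i j. comm_sign c (P s k) * mmul1 (adj1 (corr_right P s k)) (pauli c) i j) y x"
    unfolding corr_left_def corr_right_def prod_op_def by (intro prod.cong refl) (simp add: pauli_commute)
  then show ?thesis
    unfolding global_pauli_def adj_corr_def prod_op_mult prod_op_scale .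
qed

lemma global_pauli_meas_vec:
  assumes N: "N \<ge> 2"
  shows "\<exists>\<theta>. \<forall>y. (\<Sum>z\<in>cfgs N. global_pauli N c y z * meas_vec N P s z) = \<theta> * meas_vec N P s y"
proof -
  define \<kappa> where "\<kappa> = (\<Prod>k\<in>{1..N}. comm_sign c (if k = 1 then P s 0 else (False,False)) * comm_sign c (P s k))"
  define \<mu> where "\<mu> = (\<Prod>k\<in>{1..N-1}. comm_sign c (s k))"
  let ?T = "global_pauli N c" and ?A = "adj_corr N P s" and ?V = "ideal_vec N s"
  have "(\<Sum>z\<in>cfgs N. ?T y z * meas_vec N P s z) = \<kappa> * \<mu> * meas_vec N P s y" for y
  proof -
    have "(\<Sum>z\<in>cfgs N. ?T y z * meas_vec N P s z) = (\<Sum>z\<in>cfgs N. \<Sum>x\<in>cfgs N. ?T y z * ?A z x * ?V x)"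
      unfolding meas_vec_eq_adj_corr by (simp add: sum_distrib_left mult_ac)
    also have "\<dots> = (\<Sum>x\<in>cfgs N. (\<Sum>z\<in>cfgs N. ?T y z * ?A z x) * ?V x)"
      by (subst sum.swap) (simp add: sum_distrib_right)
    also have "\<dots> = \<kappa> * (\<Sum>x\<in>cfgs N. \<Sum>z\<in>cfgs N. ?A y z * ?T z x * ?V x)"
      unfolding global_pauli_adj_corr \<kappa>_def by (simp add: sum_distrib_left sum_distrib_right mult_ac)
    also have "\<dots> = \<kappa> * (\<Sum>z\<in>cfgs N. ?A y z * (\<Sum>x\<in>cfgs N. ?T z x * ?V x))"
      by (subst sum.swap) (simp add: sum_distrib_left mult_ac)
    also have "\<dots> = \<kappa> * \<mu> * meas_vec N P s y"
      unfolding global_pauli_ideal_vec[OF N] meas_vec_eq_adj_corr \<mu>_def by (simp add: sum_distrib_left mult_ac)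
    finally show ?thesis .
  qed
  then show ?thesis by blast
qed

lemma chain_inner_bell_prod_global_pauli:
  "chain_inner N (bell_prod N a) (\<lambda>y. \<Sum>z\<in>cfgs N. global_pauli N c y z * g z) =
   comm_sign c (label_sum a N) * chain_inner N (bell_prod N a) g"
proof -
  have "chain_inner N (bell_prod N a) (\<lambda>y. \<Sum>z\<in>cfgs N. global_pauli N c y z * g z) =
      (\<Sum>z\<in>cfgs N. \<Sum>y\<in>cfgs N. cnj (bell_prod N a y) * global_pauli N c y z * g z)"
    unfolding chain_inner_def by (subst sum.swap) (simp add: sum_distrib_left mult_ac)
  also have "\<dots> = (\<Sum>z\<in>cfgs N. cnj (\<Sum>y\<in>cfgs N. global_pauli N c z y * bell_prod N a y) * g z)"
    by (simp add: cnj_global_pauli sum_distrib_left sum_distrib_right mult_ac)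
  also have "\<dots> = comm_sign c (label_sum a N) * chain_inner N (bell_prod N a) g"
    unfolding global_pauli_bell_prod chain_inner_def by (simp add: sum_distrib_left mult_ac)
  finally show ?thesis .
qed

lemma chain_inner_bell_prod_meas_vec_eq_0:
  assumes N: "N \<ge> 2" and nz: "chain_inner N (bell_prod N (\<lambda>_. (False,False))) (meas_vec N P s) \<noteq> 0"
    and a: "label_sum a N \<noteq> (False,False)"
  shows "chain_inner N (bell_prod N a) (meas_vec N P s) = 0"
proof -
  obtain c where c: "comm_sign c (label_sum a N) = -1" using comm_sign_separates[OF a] by blast
  obtain \<theta> where \<theta>: "\<And>y. (\<Sum>z\<in>cfgs N. global_pauli N c y z * meas_vec N P s z) = \<theta> * meas_vec N P s y"
    using global_pauli_meas_vec[OF N] by blast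
  have eigen: "\<theta> * chain_inner N (bell_prod N b) (meas_vec N P s) =
      comm_sign c (label_sum b N) * chain_inner N (bell_prod N b) (meas_vec N P s)" for b
    using chain_inner_bell_prod_global_pauli[of N b c "meas_vec N P s"]
    unfolding \<theta> chain_inner_def by (simp add: sum_distrib_left mult_ac)
  have "label_sum (\<lambda>_. (False,False)) n = (False,False)" for n
    by (induction n) (simp_all add: xor2_def)
  then have "\<theta> = 1" using eigen[of "\<lambda>_. (False,False)"] nz by (simp add: comm_sign_00)
  then show ?thesis using eigen[of a] unfolding c by simp
qed

definition even_labels :: "nat \<Rightarrow> (nat \<Rightarrow> qb2) set" where
  "even_labels N = {a \<in> cfgs N. label_sum a N = (False,False)}"

lemma finite_even_labels [simp]: "finite (even_labels N)"
  unfolding even_labels_def by simp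

lemma bij_betw_syns_even_labels:
  assumes M: "N = Suc M" and "M \<ge> 1"
  shows "bij_betw (\<lambda>s. s(N := label_sum s M)) (syns N) (even_labels N)"
proof (rule bij_betw_byWitness[where f' = "\<lambda>a. a(N := undefined)"])
  have range: "{1..N} = insert N {1..N-1}" "N \<notin> {1..N-1}" using assms by auto
  have label_sum_upd: "label_sum (s(N := b)) M = label_sum s M" for s b
    by (rule label_sum_cong) (auto simp: M)
  show "\<forall>s\<in>syns N. (s(N := label_sum s M))(N := undefined) = s"
  proof
    fix s assume "s \<in> syns N"
    then have "s N = undefined" using range(2) unfolding syns_def by (rule PiE_arb)
    then show "(s(N := label_sum s M))(N := undefined) = s" by (metis fun_upd_triv fun_upd_upd)
  qed
  show "\<forall>a\<in>even_labels N. (a(N := undefined))(N := label_sum (a(N := undefined)) M) = a"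
  proof
    fix a assume "a \<in> even_labels N"
    then have "xor2 (label_sum a M) (a N) = (False,False)" unfolding even_labels_def M by simp
    then have "a N = label_sum a M" by (auto simp: xor2_def prod_eq_iff)
    then show "(a(N := undefined))(N := label_sum (a(N := undefined)) M) = a"
      by (auto simp: label_sum_upd)
  qed
  show "(\<lambda>s. s(N := label_sum s M)) ` syns N \<subseteq> even_labels N"
  proof clarify
    fix s assume "s \<in> syns N"
    then have "s(N := label_sum s M) \<in> cfgs N"
      unfolding syns_def cfgs_def range(1) by (simp add: PiE_fun_upd)
    moreover have "label_sum (s(N := label_sum s M)) N = (False,False)"
      unfolding M by (simp add: label_sum_upd[unfolded M] xor2_def)
    ultimately show "s(N := label_sum s M) \<in> even_labels N" unfolding even_labels_def by simp
  qed
  show "(\<lambda>a. a(N := undefined)) ` even_labels N \<subseteq> syns N"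
  proof clarify
    fix a assume "a \<in> even_labels N"
    then have "a \<in> PiE (insert N {1..N-1}) (\<lambda>_. UNIV)"
      unfolding even_labels_def cfgs_def range(1) by simp
    then show "a(N := undefined) \<in> syns N"
      unfolding syns_def using fun_upd_in_PiE[of N "{1..N-1}" a "\<lambda>_. UNIV"] range(2) by blast
  qed
qed

lemma card_syns_eq_card_even_labels:
  assumes N: "N \<ge> 2"
  shows "card (syns N) = card (even_labels N)"
proof -
  obtain M where "N = Suc M" "M \<ge> 1" using N by (cases N) auto
  then show ?thesis by (rule bij_betw_same_card[OF bij_betw_syns_even_labels])
qed

lemma bell_prod_complete:
  assumes y: "y \<in> cfgs N" and y': "y' \<in> cfgs N"
  shows "(\<Sum>a\<in>cfgs N. bell_prod N a y * cnj (bell_prod N a y')) = (if y = y' then 1 else 0)"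
proof -
  have "(\<Sum>a\<in>cfgs N. bell_prod N a y * cnj (bell_prod N a y')) =
      (\<Sum>a\<in>cfgs N. \<Prod>k\<in>{1..N}. bell (a k) (y k) * cnj (bell (a k) (y' k)))"
    unfolding bell_prod_def link_vec_def by (simp add: prod.distrib)
  also have "\<dots> = (\<Prod>k\<in>{1..N}. \<Sum>b\<in>UNIV. bell b (y k) * cnj (bell b (y' k)))"
    by (rule sum_cfgs_prod)
  also have "\<dots> = (\<Prod>k\<in>{1..N}. if y k = y' k then 1 else 0)"
    by (simp add: bell_complete)
  also have "\<dots> = (if y = y' then 1 else 0)"
  proof (cases "y = y'")
    case False
    then obtain k where "k \<in> {1..N}" "y k \<noteq> y' k"
      using PiE_ext[of y "{1..N}" "\<lambda>_. UNIV" y'] y y' unfolding cfgs_def by blast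
    then show ?thesis using False by (intro trans[OF prod_zero]) auto
  qed simp
  finally show ?thesis .
qed

lemma bell_prod_expansion:
  assumes y: "y \<in> cfgs N"
  shows "f y = (\<Sum>a\<in>cfgs N. bell_prod N a y * chain_inner N (bell_prod N a) f)"
proof -
  have "(\<Sum>a\<in>cfgs N. bell_prod N a y * chain_inner N (bell_prod N a) f) =
      (\<Sum>a\<in>cfgs N. \<Sum>y'\<in>cfgs N. bell_prod N a y * cnj (bell_prod N a y') * f y')"
    unfolding chain_inner_def by (simp add: sum_distrib_left mult_ac)
  also have "\<dots> = (\<Sum>y'\<in>cfgs N. (\<Sum>a\<in>cfgs N. bell_prod N a y * cnj (bell_prod N a y')) * f y')"
    by (subst sum.swap) (simp add: sum_distrib_right)
  also have "\<dots> = f y"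
    using y by (simp add: bell_prod_complete if_distrib[where f = "\<lambda>c. c * _"] cong: if_cong)
  finally show ?thesis by simp
qed

lemma tens_bellproj_00:
  "tens N (\<lambda>_. bellproj (False,False)) y y' =
   bell_prod N (\<lambda>_. (False,False)) y * cnj (bell_prod N (\<lambda>_. (False,False)) y')"
  unfolding tens_def bell_prod_def link_vec_def bellproj_def by (simp add: prod.distrib)

lemma fid_divide: "fid (\<lambda>i j. M i j / c) = fid M / c"
  unfolding fid_def by (simp add: sum_divide_distrib)

text \<open>Condition (B) is used only here: a vanishing overlap would make the normalised output
  orthogonal to \<open>\<Psi>_00\<close>.\<close>
lemma chain_inner_bell_prod_00_meas_vec:
  assumes N: "N \<ge> 2" and sp: "swap_protocol N P" and s: "s \<in> syns N"
  shows "chain_inner N (bell_prod N (\<lambda>_. (False,False))) (meas_vec N P s) \<noteq> 0"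
proof
  let ?e = "bell_prod N (\<lambda>_. (False,False))"
  let ?M = "lam_s N P s (tens N (\<lambda>_. bellproj (False, False)))"
  assume "chain_inner N ?e (meas_vec N P s) = 0"
  moreover have "fid ?M = (\<Sum>y\<in>cfgs N. \<Sum>y'\<in>cfgs N. (cnj (meas_vec N P s y) * ?e y) * (cnj (?e y') * meas_vec N P s y'))"
    unfolding fid_lam_s_meas_vec[OF N] tens_bellproj_00 by (simp add: mult_ac)
  then have "fid ?M = (\<Sum>y\<in>cfgs N. cnj (meas_vec N P s y) * ?e y) * chain_inner N ?e (meas_vec N P s)"
    unfolding chain_inner_def by (simp add: sum_product)
  moreover have "(\<lambda>i j. ?M i j / tr2 ?M) = bellproj (False, False)"
    using sp s unfolding swap_protocol_def by blast
  then have "fid (bellproj (False, False)) = fid ?M / tr2 ?M" by (metis fid_divide)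
  ultimately show False by (simp add: fid_bellproj)
qed

lemma meas_vec_expansion:
  assumes N: "N \<ge> 2" and sp: "swap_protocol N P" and s: "s \<in> syns N" and y: "y \<in> cfgs N"
  shows "meas_vec N P s y = (\<Sum>a\<in>even_labels N. bell_prod N a y * chain_inner N (bell_prod N a) (meas_vec N P s))"
proof -
  have "meas_vec N P s y = (\<Sum>a\<in>cfgs N. bell_prod N a y * chain_inner N (bell_prod N a) (meas_vec N P s))"
    by (rule bell_prod_expansion[OF y])
  also have "\<dots> = (\<Sum>a\<in>even_labels N. bell_prod N a y * chain_inner N (bell_prod N a) (meas_vec N P s))"
  proof (rule sum.mono_neutral_right)
    show "\<forall>a\<in>cfgs N - even_labels N. bell_prod N a y * chain_inner N (bell_prod N a) (meas_vec N P s) = 0"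
      using chain_inner_bell_prod_meas_vec_eq_0[OF N chain_inner_bell_prod_00_meas_vec[OF N sp s]]
      unfolding even_labels_def by auto
  qed (auto simp: even_labels_def)
  finally show ?thesis .
qed

lemma meas_vec_coefficients_orthonormal:
  assumes N: "N \<ge> 2" and sp: "swap_protocol N P" and s: "s \<in> syns N" and t: "t \<in> syns N"
  shows "(\<Sum>a\<in>even_labels N. cnj (chain_inner N (bell_prod N a) (meas_vec N P s)) * chain_inner N (bell_prod N a) (meas_vec N P t))
       = (if s = t then 1 else 0)"
proof -
  let ?c = "\<lambda>a. chain_inner N (bell_prod N a) (meas_vec N P t)"
  have "(\<Sum>a\<in>even_labels N. cnj (chain_inner N (bell_prod N a) (meas_vec N P s)) * ?c a) =
      (\<Sum>a\<in>even_labels N. \<Sum>y\<in>cfgs N. cnj (meas_vec N P s y) * (bell_prod N a y * ?c a))"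
    unfolding chain_inner_def[of N _ "meas_vec N P s"] by (simp add: sum_distrib_left sum_distrib_right mult_ac)
  also have "\<dots> = (\<Sum>y\<in>cfgs N. cnj (meas_vec N P s y) * (\<Sum>a\<in>even_labels N. bell_prod N a y * ?c a))"
    by (subst sum.swap) (simp add: sum_distrib_left)
  also have "\<dots> = (\<Sum>y\<in>cfgs N. cnj (meas_vec N P s y) * meas_vec N P t y)"
    by (intro sum.cong refl) (simp add: meas_vec_expansion[OF N sp t])
  also have "\<dots> = (if s = t then 1 else 0)"
    by (rule meas_vec_orthonormal[OF N sp s t])
  finally show ?thesis .
qed

lemma sum_meas_vec_projector:
  assumes N: "N \<ge> 2" and sp: "swap_protocol N P" and y: "y \<in> cfgs N" and y': "y' \<in> cfgs N"
  shows "(\<Sum>s\<in>syns N. meas_vec N P s y' * cnj (meas_vec N P s y)) = (\<Sum>a\<in>even_labels N. bell_prod N a y' * cnj (bell_prod N a y))"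
proof -
  define U where "U a s = chain_inner N (bell_prod N a) (meas_vec N P s)" for a s
  have rows: "(\<Sum>s\<in>syns N. U a s * cnj (U b s)) = (if a = b then 1 else 0)"
    if "a \<in> even_labels N" "b \<in> even_labels N" for a b
  proof (rule orthonormal_columns_imp_orthonormal_rows[OF finite_even_labels finite_syns
        card_syns_eq_card_even_labels[OF N, symmetric] _ that])
    show "(\<Sum>a\<in>even_labels N. cnj (U a s) * U a t) = (if s = t then 1 else 0)"
      if "s \<in> syns N" "t \<in> syns N" for s t
      unfolding U_def using meas_vec_coefficients_orthonormal[OF N sp that] .
  qed
  have "(\<Sum>s\<in>syns N. meas_vec N P s y' * cnj (meas_vec N P s y)) =
      (\<Sum>s\<in>syns N. \<Sum>a\<in>even_labels N. \<Sum>b\<in>even_labels N. bell_prod N a y' * cnj (bell_prod N b y) * (U a s * cnj (U b s)))"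
    unfolding U_def
    by (intro sum.cong refl) (simp add: meas_vec_expansion[OF N sp _ y] meas_vec_expansion[OF N sp _ y'] sum_product mult_ac)
  also have "\<dots> = (\<Sum>a\<in>even_labels N. \<Sum>b\<in>even_labels N. \<Sum>s\<in>syns N. bell_prod N a y' * cnj (bell_prod N b y) * (U a s * cnj (U b s)))"
    by (rule sum_swap3)
  also have "\<dots> = (\<Sum>a\<in>even_labels N. \<Sum>b\<in>even_labels N. bell_prod N a y' * cnj (bell_prod N b y) * (\<Sum>s\<in>syns N. U a s * cnj (U b s)))"
    by (simp add: sum_distrib_left)
  also have "\<dots> = (\<Sum>a\<in>even_labels N. bell_prod N a y' * cnj (bell_prod N a y))"
    by (simp add: rows if_distrib[where f = "\<lambda>c. _ * c"] cong: if_cong)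
  finally show ?thesis .
qed

definition bell_weight :: "op2 \<Rightarrow> qb2 \<Rightarrow> complex" where
  "bell_weight \<rho> b = (\<Sum>i\<in>UNIV. \<Sum>j\<in>UNIV. cnj (bell b i) * \<rho> i j * bell b j)"

lemma fid_sum: "fid (\<lambda>i j. \<Sum>s\<in>S. M s i j) = (\<Sum>s\<in>S. fid (M s))"
proof -
  have "fid (\<lambda>i j. \<Sum>s\<in>S. M s i j) =
      (\<Sum>i\<in>UNIV. \<Sum>j\<in>UNIV. \<Sum>s\<in>S. cnj (bell (False, False) i) * M s i j * bell (False, False) j)"
    unfolding fid_def by (simp add: sum_distrib_left sum_distrib_right)
  also have "\<dots> = (\<Sum>s\<in>S. \<Sum>i\<in>UNIV. \<Sum>j\<in>UNIV. cnj (bell (False, False) i) * M s i j * bell (False, False) j)"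
    by (rule sum_swap3[symmetric])
  finally show ?thesis unfolding fid_def .
qed

lemma bell_prod_tens:
  "(\<Sum>y\<in>cfgs N. \<Sum>y'\<in>cfgs N. cnj (bell_prod N a y) * tens N \<rho>s y y' * bell_prod N a y') =
   (\<Prod>k\<in>{1..N}. bell_weight (\<rho>s k) (a k))"
proof -
  have "(\<Sum>y\<in>cfgs N. \<Sum>y'\<in>cfgs N. cnj (bell_prod N a y) * tens N \<rho>s y y' * bell_prod N a y') =
      (\<Sum>y\<in>cfgs N. \<Sum>y'\<in>cfgs N. \<Prod>k\<in>{1..N}. cnj (bell (a k) (y k)) * \<rho>s k (y k) (y' k) * bell (a k) (y' k))"
    unfolding bell_prod_def link_vec_def tens_def by (simp add: prod.distrib)
  also have "\<dots> = (\<Sum>y\<in>cfgs N. \<Prod>k\<in>{1..N}. \<Sum>w\<in>UNIV. cnj (bell (a k) (y k)) * \<rho>s k (y k) w * bell (a k) w)"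
    by (intro sum.cong refl) (rule sum_cfgs_prod)
  also have "\<dots> = (\<Prod>k\<in>{1..N}. \<Sum>v\<in>UNIV. \<Sum>w\<in>UNIV. cnj (bell (a k) v) * \<rho>s k v w * bell (a k) w)"
    by (rule sum_cfgs_prod)
  finally show ?thesis unfolding bell_weight_def .
qed

lemma fid_lam_tens:
  assumes N: "N \<ge> 2" and sp: "swap_protocol N P"
  shows "fid (lam N P (tens N \<rho>s)) = (\<Sum>a\<in>even_labels N. \<Prod>k\<in>{1..N}. bell_weight (\<rho>s k) (a k))"
proof -
  let ?r = "tens N \<rho>s"
  have "fid (lam N P ?r) = (\<Sum>s\<in>syns N. \<Sum>y\<in>cfgs N. \<Sum>y'\<in>cfgs N. cnj (meas_vec N P s y) * ?r y y' * meas_vec N P s y')"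
    unfolding lam_def fid_sum fid_lam_s_meas_vec[OF N] ..
  also have "\<dots> = (\<Sum>y\<in>cfgs N. \<Sum>y'\<in>cfgs N. \<Sum>s\<in>syns N. cnj (meas_vec N P s y) * ?r y y' * meas_vec N P s y')"
    by (rule sum_swap3)
  also have "\<dots> = (\<Sum>y\<in>cfgs N. \<Sum>y'\<in>cfgs N. ?r y y' * (\<Sum>s\<in>syns N. meas_vec N P s y' * cnj (meas_vec N P s y)))"
    by (simp add: sum_distrib_left mult_ac)
  also have "\<dots> = (\<Sum>y\<in>cfgs N. \<Sum>y'\<in>cfgs N. \<Sum>a\<in>even_labels N. cnj (bell_prod N a y) * ?r y y' * bell_prod N a y')"
    by (simp add: sum_meas_vec_projector[OF N sp] sum_distrib_left mult_ac)
  also have "\<dots> = (\<Sum>a\<in>even_labels N. \<Sum>y\<in>cfgs N. \<Sum>y'\<in>cfgs N. cnj (bell_prod N a y) * ?r y y' * bell_prod N a y')"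
    by (rule sum_swap3[symmetric])
  also have "\<dots> = (\<Sum>a\<in>even_labels N. \<Prod>k\<in>{1..N}. bell_weight (\<rho>s k) (a k))"
    unfolding bell_prod_tens ..
  finally show ?thesis .
qed

section \<open>Convolution of Bell-diagonal weights\<close>

definition label_conv :: "(nat \<Rightarrow> qb2 \<Rightarrow> real) \<Rightarrow> nat \<Rightarrow> qb2 \<Rightarrow> real" where
  "label_conv q n b = (\<Sum>a\<in>cfgs n. if label_sum a n = b then (\<Prod>k\<in>{1..n}. q k (a k)) else 0)"

definition prob_vector :: "(qb2 \<Rightarrow> real) \<Rightarrow> bool" where
  "prob_vector q \<longleftrightarrow> (\<forall>e. 0 \<le> q e) \<and> (\<Sum>e\<in>UNIV. q e) = 1"

definition werner_vector :: "real \<Rightarrow> qb2 \<Rightarrow> real" where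
  "werner_vector f b = (if b = (False,False) then f else (1 - f) / 3)"

lemma label_conv_0: "label_conv q 0 b = (if b = (False,False) then 1 else 0)"
  unfolding label_conv_def cfgs_def by simp

lemma label_conv_Suc: "label_conv q (Suc n) b = (\<Sum>c\<in>UNIV. label_conv q n c * q (Suc n) (xor2 c b))"
proof -
  have ins: "{1..Suc n} = insert (Suc n) {1..n}" by auto
  have xor2_eq_iff: "xor2 c y = b \<longleftrightarrow> y = xor2 c b" for c y by (auto simp: xor2_def prod_eq_iff)
  have "label_conv q (Suc n) b = (\<Sum>y\<in>UNIV. \<Sum>g\<in>cfgs n.
      if label_sum (g(Suc n := y)) (Suc n) = b then (\<Prod>k\<in>{1..Suc n}. q k ((g(Suc n := y)) k)) else 0)"
    unfolding label_conv_def cfgs_def ins by (rule sum_PiE_insert) auto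
  also have "\<dots> = (\<Sum>y\<in>UNIV. \<Sum>g\<in>cfgs n.
      if y = xor2 (label_sum g n) b then (\<Prod>k\<in>{1..n}. q k (g k)) * q (Suc n) y else 0)"
  proof (intro sum.cong refl)
    fix y g
    have "label_sum (g(Suc n := y)) n = label_sum g n" by (rule label_sum_cong) auto
    moreover have "(\<Prod>k\<in>{1..n}. q k ((g(Suc n := y)) k)) = (\<Prod>k\<in>{1..n}. q k (g k))"
      by (rule prod.cong) auto
    ultimately show "(if label_sum (g(Suc n := y)) (Suc n) = b then (\<Prod>k\<in>{1..Suc n}. q k ((g(Suc n := y)) k)) else 0) =
      (if y = xor2 (label_sum g n) b then (\<Prod>k\<in>{1..n}. q k (g k)) * q (Suc n) y else 0)"
      unfolding ins by (simp add: xor2_eq_iff)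
  qed
  also have "\<dots> = (\<Sum>g\<in>cfgs n. \<Sum>c\<in>UNIV. (if label_sum g n = c then (\<Prod>k\<in>{1..n}. q k (g k)) else 0) * q (Suc n) (xor2 c b))"
    by (subst sum.swap) (simp add: if_distrib[where f = "\<lambda>t. t * _"] cong: if_cong)
  also have "\<dots> = (\<Sum>c\<in>UNIV. label_conv q n c * q (Suc n) (xor2 c b))"
    unfolding label_conv_def by (subst sum.swap) (simp add: sum_distrib_right)
  finally show ?thesis .
qed

lemma xor2_commute: "xor2 a b = xor2 b a"
  by (auto simp: xor2_def)

lemma sum_xor2: "(\<Sum>d\<in>UNIV. f (xor2 d c)) = (\<Sum>d\<in>UNIV. f d)"
proof (cases c)
  case (Pair a b)
  then show ?thesis by (cases a; cases b) (simp_all add: sum_qb2 xor2_def ac_simps)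
qed

lemma prob_vector_nonneg: "prob_vector q \<Longrightarrow> 0 \<le> q c"
  unfolding prob_vector_def by blast

lemma prob_vector_sum: "prob_vector q \<Longrightarrow> (\<Sum>e\<in>UNIV. q e) = 1"
  unfolding prob_vector_def by blast

lemma prob_vector_le_1: "prob_vector q \<Longrightarrow> q c \<le> 1"
  using member_le_sum[of c UNIV q] prob_vector_nonneg prob_vector_sum by fastforce

lemma werner_vector_00 [simp]: "werner_vector f (False,False) = f"
  by (simp add: werner_vector_def)

lemma prob_vector_werner_vector:
  assumes "prob_vector q"
  shows "prob_vector (werner_vector (q (False,False)))"
proof -
  have "0 \<le> q (False,False)" "q (False,False) \<le> 1"
    using prob_vector_nonneg[OF assms] prob_vector_le_1[OF assms] .
  then show ?thesis unfolding prob_vector_def werner_vector_def by (auto simp: sum_qb2 field_simps)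
qed

lemma prob_vector_label_conv:
  assumes "\<forall>k\<in>{1..n}. prob_vector (q k)"
  shows "prob_vector (label_conv q n)"
  using assms
proof (induction n)
  case 0
  show ?case unfolding prob_vector_def label_conv_0 by (simp add: sum_qb2)
next
  case (Suc n)
  then have G: "prob_vector (label_conv q n)" and q: "prob_vector (q (Suc n))" by auto
  have "(\<Sum>b\<in>UNIV. label_conv q (Suc n) b) = (\<Sum>c\<in>UNIV. label_conv q n c * (\<Sum>b\<in>UNIV. q (Suc n) (xor2 b c)))"
    unfolding label_conv_Suc by (subst sum.swap) (simp add: sum_distrib_left xor2_commute)
  also have "\<dots> = 1"
    using prob_vector_sum[OF G] prob_vector_sum[OF q] by (simp add: sum_xor2)
  finally have "(\<Sum>b\<in>UNIV. label_conv q (Suc n) b) = 1" .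
  moreover have "0 \<le> label_conv q (Suc n) b" for b
    unfolding label_conv_Suc by (intro sum_nonneg mult_nonneg_nonneg prob_vector_nonneg[OF G] prob_vector_nonneg[OF q])
  ultimately show ?case unfolding prob_vector_def by blast
qed

lemma label_conv_le_off_00:
  assumes "\<forall>k\<in>{1..n}. prob_vector (q k) \<and> 1 - q k (False,False) \<le> \<epsilon>" and "c \<noteq> (False,False)"
  shows "label_conv q n c \<le> real n * \<epsilon>"
  using assms(1)
proof (induction n)
  case 0
  show ?case using assms(2) by (simp add: label_conv_0)
next
  case (Suc n)
  let ?G = "label_conv q n" and ?q = "q (Suc n)"
  have G: "prob_vector ?G" and q: "prob_vector ?q" and \<epsilon>: "1 - ?q (False,False) \<le> \<epsilon>"
    using Suc.prems prob_vector_label_conv by auto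
  have "(1 - ?G c) * ?q (False,False) \<le> (\<Sum>d\<in>UNIV. (1 - ?G d) * ?q (xor2 d c))"
    using G q prob_vector_le_1[OF G] member_le_sum[of c UNIV "\<lambda>d. (1 - ?G d) * ?q (xor2 d c)"]
    unfolding prob_vector_def by (simp add: xor2_def)
  also have "\<dots> = 1 - label_conv q (Suc n) c"
    using q unfolding label_conv_Suc prob_vector_def by (simp add: algebra_simps sum_subtractf sum_xor2[of ?q c])
  moreover have "?G c * ?q (False,False) \<le> ?G c"
    using prob_vector_le_1[OF q] prob_vector_nonneg[OF G] by (rule mult_left_le)
  moreover have "?G c \<le> real n * \<epsilon>" using Suc by auto
  ultimately show ?case using \<epsilon> by (simp add: algebra_simps)
qed

lemma label_conv_werner_symmetric:
  "label_conv (\<lambda>k. werner_vector (f k)) n (False,True) = label_conv (\<lambda>k. werner_vector (f k)) n (True,True) \<and>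
   label_conv (\<lambda>k. werner_vector (f k)) n (True,False) = label_conv (\<lambda>k. werner_vector (f k)) n (True,True)"
  by (induction n) (simp_all add: label_conv_0 label_conv_Suc sum_qb2 xor2_def werner_vector_def)

lemma sum_mult_werner_vector:
  assumes "G (False,True) = G (True,True)" "G (True,False) = G (True,True)" and "prob_vector p"
  shows "(\<Sum>c\<in>UNIV. G c * werner_vector (p (False,False)) c) = (\<Sum>c\<in>UNIV. G c * p c)"
proof -
  have rest: "p (False,True) + p (True,False) + p (True,True) = 1 - p (False,False)"
    using assms(3) unfolding prob_vector_def sum_qb2 by linarith
  have "(\<Sum>c\<in>UNIV. G c * p c) = G (False,False) * p (False,False) + G (True,True) * (p (False,True) + p (True,False) + p (True,True))"
    using assms(1,2) unfolding sum_qb2 by (simp add: algebra_simps)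
  also have "\<dots> = (\<Sum>c\<in>UNIV. G c * werner_vector (p (False,False)) c)"
    using assms(1,2) unfolding rest sum_qb2 werner_vector_def by (simp add: field_simps)
  finally show ?thesis ..
qed

lemma abs_sum_mult_prob_vector_le:
  assumes q: "prob_vector q" and D0: "\<bar>D (False,False)\<bar> \<le> A"
    and D: "\<And>c. c \<noteq> (False,False) \<Longrightarrow> \<bar>D c\<bar> \<le> x"
  shows "\<bar>\<Sum>c\<in>UNIV. D c * q c\<bar> \<le> A + x * (1 - q (False,False))"
proof -
  let ?R = "UNIV - {(False,False)}"
  have q0: "0 \<le> q c" for c using q unfolding prob_vector_def by blast
  have "\<bar>\<Sum>c\<in>UNIV. D c * q c\<bar> = \<bar>D (False,False) * q (False,False) + (\<Sum>c\<in>?R. D c * q c)\<bar>"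
    by (simp add: sum.remove)
  also have "\<dots> \<le> \<bar>D (False,False)\<bar> * q (False,False) + (\<Sum>c\<in>?R. \<bar>D c\<bar> * q c)"
    using q0 by (intro order_trans[OF abs_triangle_ineq] add_mono order_trans[OF sum_abs])
      (simp_all add: abs_mult)
  also have "\<dots> \<le> A * 1 + (\<Sum>c\<in>?R. x * q c)"
    using q0 D D0 prob_vector_le_1[OF q]
    by (intro add_mono sum_mono mult_mono mult_right_mono) auto
  also have "(\<Sum>c\<in>?R. x * q c) = x * (1 - q (False,False))"
    using q unfolding prob_vector_def by (simp add: sum_distrib_left[symmetric] sum_diff1)
  finally show ?thesis by simp
qed

lemma choose_2_Suc: "Suc n choose 2 = n + (n choose 2)"
  by (simp add: numeral_2_eq_2)

lemma label_conv_werner_deviation: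
  assumes "\<forall>k\<in>{1..n}. prob_vector (p k) \<and> 1 - p k (False,False) \<le> \<epsilon>"
  shows "\<bar>label_conv p n (False,False) - label_conv (\<lambda>k. werner_vector (p k (False,False))) n (False,False)\<bar>
         \<le> real (n choose 2) * \<epsilon>\<^sup>2"
  using assms
proof (induction n)
  case 0
  show ?case by (simp add: label_conv_0)
next
  case (Suc n)
  let ?w = "\<lambda>k. werner_vector (p k (False,False))" and ?q = "p (Suc n)"
  have hyps: "\<forall>k\<in>{1..n}. prob_vector (p k) \<and> 1 - p k (False,False) \<le> \<epsilon>" using Suc.prems by auto
  have w_hyps: "\<forall>k\<in>{1..n}. prob_vector (?w k) \<and> 1 - ?w k (False,False) \<le> \<epsilon>"
    using hyps by (simp add: prob_vector_werner_vector)
  have q: "prob_vector ?q" and \<epsilon>: "1 - ?q (False,False) \<le> \<epsilon>" using Suc.prems by auto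
  have "0 \<le> \<epsilon>" using \<epsilon> prob_vector_le_1[OF q, of "(False,False)"] by linarith
  have convs: "prob_vector (label_conv p n)" "prob_vector (label_conv ?w n)"
    using hyps w_hyps by (auto intro!: prob_vector_label_conv)
  have off_00: "\<bar>label_conv p n c - label_conv ?w n c\<bar> \<le> real n * \<epsilon>" if "c \<noteq> (False,False)" for c
    using label_conv_le_off_00[OF hyps that] label_conv_le_off_00[OF w_hyps that]
      prob_vector_nonneg[OF convs(1), of c] prob_vector_nonneg[OF convs(2), of c]
    unfolding abs_le_iff by linarith
  have "label_conv p (Suc n) (False,False) - label_conv ?w (Suc n) (False,False) = (\<Sum>c\<in>UNIV. (label_conv p n c - label_conv ?w n c) * ?q c)"
    using label_conv_werner_symmetric[of "\<lambda>k. p k (False,False)" n] sum_mult_werner_vector[OF _ _ q, of "label_conv ?w n"]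
    by (simp add: label_conv_Suc xor2_def left_diff_distrib sum_subtractf)
  then have "\<bar>label_conv p (Suc n) (False,False) - label_conv ?w (Suc n) (False,False)\<bar>
      \<le> real (n choose 2) * \<epsilon>\<^sup>2 + real n * \<epsilon> * (1 - ?q (False,False))"
    using abs_sum_mult_prob_vector_le[where D = "\<lambda>c. label_conv p n c - label_conv ?w n c", OF q Suc.IH[OF hyps] off_00]
    by simp
  also have "\<dots> \<le> real (n choose 2) * \<epsilon>\<^sup>2 + real n * \<epsilon> * \<epsilon>"
    using \<epsilon> \<open>0 \<le> \<epsilon>\<close> by (intro add_left_mono mult_left_mono) auto
  finally show ?case unfolding choose_2_Suc by (simp add: algebra_simps power2_eq_square)
qed

lemma sum_even_labels_eq_label_conv:
  "(\<Sum>a\<in>even_labels N. \<Prod>k\<in>{1..N}. complex_of_real (q k (a k))) = complex_of_real (label_conv q N (False,False))"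
  unfolding label_conv_def even_labels_def by (simp add: sum.inter_filter[symmetric])

lemma bell_weight_00: "bell_weight \<rho> (False,False) = fid \<rho>"
  unfolding bell_weight_def fid_def ..

lemma bell_weight_dens:
  assumes "dens \<rho>"
  shows "bell_weight \<rho> b = complex_of_real (Re (bell_weight \<rho> b))" "0 \<le> Re (bell_weight \<rho> b)"
proof -
  have "Im (bell_weight \<rho> b) = 0" "0 \<le> Re (bell_weight \<rho> b)"
    using assms unfolding dens_def bell_weight_def by blast+
  then show "bell_weight \<rho> b = complex_of_real (Re (bell_weight \<rho> b))" "0 \<le> Re (bell_weight \<rho> b)"
    by (simp_all add: complex_eq_iff)
qed

lemma sum_bell_weight: "(\<Sum>b\<in>UNIV. bell_weight \<rho> b) = tr2 \<rho>"
proof -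
  have "(\<Sum>b\<in>UNIV. bell_weight \<rho> b) = (\<Sum>b\<in>UNIV. \<Sum>i\<in>UNIV. \<Sum>j\<in>UNIV. \<rho> i j * (bell b j * cnj (bell b i)))"
    unfolding bell_weight_def by (simp add: mult_ac)
  also have "\<dots> = (\<Sum>i\<in>UNIV. \<Sum>j\<in>UNIV. \<Sum>b\<in>UNIV. \<rho> i j * (bell b j * cnj (bell b i)))"
    by (rule sum_swap3)
  also have "\<dots> = (\<Sum>i\<in>UNIV. \<Sum>j\<in>UNIV. \<rho> i j * (if j = i then 1 else 0))"
    by (simp add: sum_distrib_left[symmetric] bell_complete)
  also have "\<dots> = tr2 \<rho>"
    unfolding tr2_def by (simp add: if_distrib[where f = "\<lambda>c. _ * c"] cong: if_cong)
  finally show ?thesis .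
qed

lemma prob_vector_bell_weight:
  assumes "dens \<rho>"
  shows "prob_vector (\<lambda>b. Re (bell_weight \<rho> b))"
  using bell_weight_dens(2)[OF assms] sum_bell_weight[of \<rho>] assms
  unfolding prob_vector_def dens_def by (metis Re_sum one_complex.sel)

lemma bell_weight_werner:
  "bell_weight (werner \<rho>) b = (if b = (False,False) then fid \<rho> else (1 - fid \<rho>) / 3)"
proof -
  have bellproj: "bell_weight (bellproj (False,False)) b = (if b = (False,False) then 1 else 0)"
  proof -
    have "bell_weight (bellproj (False,False)) b = (\<Sum>i\<in>UNIV. cnj (bell b i) * bell (False,False) i) *
        (\<Sum>j\<in>UNIV. cnj (bell (False,False) j) * bell b j)"
      unfolding bell_weight_def bellproj_def sum_product by (intro sum.cong refl) (simp add: mult_ac)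
    then show ?thesis by (simp add: bell_orthonormal)
  qed
  have identity: "bell_weight (\<lambda>i j. if i = j then 1 else 0) b = 1"
    unfolding bell_weight_def
    by (simp add: if_distrib[where f = "\<lambda>c. _ * c"] if_distrib[where f = "\<lambda>c. c * _"] bell_orthonormal cong: if_cong)
  have "bell_weight (werner \<rho>) b = (4 * fid \<rho> - 1) / 3 * bell_weight (bellproj (False,False)) b
      + (1 - fid \<rho>) / 3 * bell_weight (\<lambda>i j. if i = j then 1 else 0) b"
    unfolding bell_weight_def werner_def by (simp add: sum_distrib_left sum.distrib algebra_simps)
  then show ?thesis unfolding bellproj identity by (cases "b = (False,False)") (simp_all add: field_simps)
qed

lemma fid_lam_werner_deviation:
  assumes N: "N \<ge> 2" and dens: "\<forall>k\<in>{1..N}. dens (\<rho>s k)" and sp: "swap_protocol N P"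
    and \<epsilon>: "\<forall>k\<in>{1..N}. 1 - Re (fid (\<rho>s k)) \<le> \<epsilon>"
  shows "cmod (fid (lam N P (tens N \<rho>s)) - fid (lam N P (tens N (\<lambda>k. werner (\<rho>s k)))))
         \<le> real (N choose 2) * \<epsilon>\<^sup>2"
proof -
  define p where "p k b = Re (bell_weight (\<rho>s k) b)" for k b
  have p: "\<forall>k\<in>{1..N}. prob_vector (p k) \<and> 1 - p k (False,False) \<le> \<epsilon>"
    using dens \<epsilon> prob_vector_bell_weight unfolding p_def bell_weight_00 by blast
  have "fid (lam N P (tens N \<rho>s)) = complex_of_real (label_conv p N (False,False))"
    unfolding fid_lam_tens[OF N sp] sum_even_labels_eq_label_conv[symmetric] p_def
    using dens bell_weight_dens(1) by (intro sum.cong refl prod.cong) (auto simp: even_labels_def)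
  moreover have "fid (lam N P (tens N (\<lambda>k. werner (\<rho>s k)))) =
      complex_of_real (label_conv (\<lambda>k. werner_vector (p k (False,False))) N (False,False))"
    unfolding fid_lam_tens[OF N sp] sum_even_labels_eq_label_conv[symmetric] p_def
    using dens bell_weight_dens(1)[of _ "(False,False)", unfolded bell_weight_00]
    by (intro sum.cong refl prod.cong) (auto simp: bell_weight_werner werner_vector_def bell_weight_00)
  ultimately show ?thesis
    using label_conv_werner_deviation[OF p] by (simp flip: of_real_diff)
qed

theorem theorem2:
  shows "\<exists>C \<delta>::real. \<delta> > 0 \<and>
    (\<forall>N::nat. \<forall>\<rho>s :: nat \<Rightarrow> op2. \<forall>P. \<forall>\<epsilon>::real.
       N \<ge> 2 \<and> (\<forall>k\<in>{1..N}. dens (\<rho>s k)) \<and> swap_protocol N P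
       \<and> (\<forall>k\<in>{1..N}. 1 - Re (fid (\<rho>s k)) < \<epsilon>) \<and> real N * \<epsilon> < \<delta>
       \<longrightarrow> cmod (fid (lam N P (tens N \<rho>s)) - fid (lam N P (tens N (\<lambda>k. werner (\<rho>s k)))))
           \<le> real (N choose 2) * \<epsilon>^2 + C * real N ^ 3 * \<epsilon> ^ 3)"
proof -
  have "cmod (fid (lam N P (tens N \<rho>s)) - fid (lam N P (tens N (\<lambda>k. werner (\<rho>s k)))))
      \<le> real (N choose 2) * \<epsilon>^2 + 0 * real N ^ 3 * \<epsilon> ^ 3"
    if "N \<ge> 2 \<and> (\<forall>k\<in>{1..N}. dens (\<rho>s k)) \<and> swap_protocol N P \<and> (\<forall>k\<in>{1..N}. 1 - Re (fid (\<rho>s k)) < \<epsilon>)"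
    for N \<rho>s P and \<epsilon> :: real
    using that fid_lam_werner_deviation[of N \<rho>s P \<epsilon>] by (simp add: less_imp_le)
  then show ?thesis by (intro exI[of _ 0] exI[of _ 1]) simp
qed

end
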